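(* The diamond product $\diamond$ and the shuffle product $\sqcup\!\sqcup$ on $\mathfrak D$ are associative.
   Context: Let $q$ be a prime power. Let $\Gamma=\{x_{n,\varepsilon}\}_{n\in\mathbb N,\varepsilon\in\mathbb F_q^*}$ be an alphabet with weights $w(x_{n,\varepsilon})=n$, $\langle\Gamma\rangle$ the set of words over $\Gamma$ (empty word $1$, juxtaposition = concatenation) and $\mathfrak D$ the $\mathbb F_q$-vector space with basis $\langle\Gamma\rangle$; write $x_n:=x_{n,1}$. For positive integers $r,s,j$ put $\Delta^j_{r,s}=(-1)^{r-1}\binom{j-1}{r-1}+(-1)^{s-1}\binom{j-1}{s-1}$ if $(q-1)\mid j$ and $0$ otherwise. The bilinear products $\diamond,\sqcup\!\sqcup$ on $\mathfrak D$ are defined recursively by $1\diamond\mathfrak a=\mathfrak a\diamond1=\mathfrak a$, $1\sqcup\!\sqcup\mathfrak a=\mathfrak a\sqcup\!\sqcup1=\mathfrak a$ and, for nonempty words $\mathfrak a=x_{a,\alpha}\mathfrak a_-$, $\mathfrak b=x_{b,\beta}\mathfrak b_-$: $\mathfrak a\diamond\mathfrak b=x_{a+b,\alpha\beta}(\mathfrak a_-\sqcup\!\sqcup\mathfrak b_-)+\sum_{i+j=a+b}\Delta^j_{a,b}x_{i,\alpha\beta}(x_j\sqcup\!\sqcup(\mathfrak a_-\sqcup\!\sqcup\mathfrak b_-))$ and $\mathfrak a\sqcup\!\sqcup\mathfrak b=x_{a,\alpha}(\mathfrak a_-\sqcup\!\sqcup\mathfrak b)+x_{b,\beta}(\mathfrak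 a\sqcup\!\sqcup\mathfrak b_-)+\mathfrak a\diamond\mathfrak b$ ($i,j$ positive integers). *)

theory Defs
  imports Main "HOL-Library.Function_Algebras"
begin

text \<open>The field F_q is modelled by an arbitrary finite field type 'k (q = CARD('k)).
  A letter x_{n,e} is the pair (n, e) with n \<ge> 1 and e \<noteq> 0; words are lists of letters;
  elements of the vector space D are functions from words to 'k with finite support
  on valid words.\<close>

type_synonym 'k letter = "nat \<times> 'k"
type_synonym 'k word = "'k letter list"
type_synonym 'k vec = "'k word \<Rightarrow> 'k"

definition supp :: "'k::zero vec \<Rightarrow> 'k word set" where
  "supp v = {w. v w \<noteq> 0}"

definition valid_word :: "'k::zero word \<Rightarrow> bool" where
  "valid_word w \<longleftrightarrow> (\<forall>(n, e) \<in> set w. 1 \<le> n \<and> e \<noteq> 0)"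

definition DD :: "'k::zero vec set" where
  "DD = {v. finite (supp v) \<and> (\<forall>w \<in> supp v. valid_word w)}"

definition basis :: "'k word \<Rightarrow> 'k::{zero,one} vec" where
  "basis w = (\<lambda>z. if z = w then 1 else 0)"

definition pre :: "'k letter \<Rightarrow> 'k::zero vec \<Rightarrow> 'k vec" where
  "pre l v = (\<lambda>z. case z of [] \<Rightarrow> 0 | l' # z' \<Rightarrow> if l' = l then v z' else 0)"

definition smul :: "'k \<Rightarrow> 'k::times vec \<Rightarrow> 'k vec" where
  "smul c v = (\<lambda>z. c * v z)"

definition lin_ext :: "('k word \<Rightarrow> 'k vec) \<Rightarrow> 'k::comm_ring_1 vec \<Rightarrow> 'k vec" where
  "lin_ext f v = (\<lambda>z. \<Sum>u\<in>supp v. v u * f u z)"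

definition bil_ext :: "('k word \<Rightarrow> 'k word \<Rightarrow> 'k vec) \<Rightarrow> 'k::comm_ring_1 vec \<Rightarrow> 'k vec \<Rightarrow> 'k vec" where
  "bil_ext f u v = (\<lambda>z. \<Sum>a\<in>supp u. \<Sum>b\<in>supp v. u a * v b * f a b z)"

definition Delta :: "nat \<Rightarrow> nat \<Rightarrow> nat \<Rightarrow> 'k::{finite,comm_ring_1}" where
  "Delta r s j = (if (card (UNIV :: 'k set) - 1) dvd j then (-1) ^ (r - 1) * of_nat ((j - 1) choose (r - 1)) + (-1) ^ (s - 1) * of_nat ((j - 1) choose (s - 1)) else (0::'k))"

text \<open>Shuffle of the single letter x_j = x_{j,1} with a word (needed for the term
  x_j shuffle (a_- shuffle b_-) in the diamond product).  Here x_j diamond b is inlined.\<close>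
fun lsh :: "nat \<Rightarrow> 'k::{finite,field} word \<Rightarrow> 'k vec" where
  "lsh j [] = basis [(j, 1)]"
| "lsh j ((b, \<beta>) # w) =
     pre (j, 1) (basis ((b, \<beta>) # w)) + pre (b, \<beta>) (lsh j w)
     + (pre (j + b, \<beta>) (basis w)
        + (\<Sum>k\<in>{1..<j + b}. smul (Delta j b k) (pre (j + b - k, \<beta>) (lsh k w))))"

text \<open>Diamond product of words, given the shuffle product on the tails.\<close>
definition dm_step :: "'k letter \<Rightarrow> 'k letter \<Rightarrow> 'k::{finite,field} vec \<Rightarrow> 'k vec" where
  "dm_step x y s = (case x of (a, \<alpha>) \<Rightarrow> case y of (b, \<beta>) \<Rightarrow>
      pre (a + b, \<alpha> * \<beta>) s
      + (\<Sum>k\<in>{1..<a + b}. smul (Delta a b k) (pre (a + b - k, \<alpha> * \<beta>) (lin_ext (lsh k) s))))"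

fun sh_w :: "'k::{finite,field} word \<Rightarrow> 'k word \<Rightarrow> 'k vec" where
  "sh_w [] b = basis b"
| "sh_w a [] = basis a"
| "sh_w (x # a) (y # b) =
     pre x (sh_w a (y # b)) + pre y (sh_w (x # a) b) + dm_step x y (sh_w a b)"

fun dm_w :: "'k::{finite,field} word \<Rightarrow> 'k word \<Rightarrow> 'k vec" where
  "dm_w [] b = basis b"
| "dm_w a [] = basis a"
| "dm_w (x # a) (y # b) = dm_step x y (sh_w a b)"

definition diamond :: "'k::{finite,field} vec \<Rightarrow> 'k vec \<Rightarrow> 'k vec" where
  "diamond = bil_ext dm_w"

definition shuffle :: "'k::{finite,field} vec \<Rightarrow> 'k vec \<Rightarrow> 'k vec" where
  "shuffle = bil_ext sh_w"

end

theory Submission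
  imports Defs "HOL-Computational_Algebra.Polynomial" "HOL-Computational_Algebra.Formal_Laurent_Series"
begin

text \<open>Both products are bilinear, so it suffices to consider words. Expanding the recursion for
  \<sqcup>\<sqcup> on (a \<sqcup>\<sqcup> b) \<sqcup>\<sqcup> c and a \<sqcup>\<sqcup> (b \<sqcup>\<sqcup> c) gives seven terms on each side; by induction on the total
  length, six of them match by associativity and commutativity for shorter words, and the
  last pair reduces, after shuffling with the remaining tails, to associativity of \<diamond> on
  one-letter words. The diamond product itself reduces to the same identity.

  Associativity of \<diamond> on letters x_a, x_b, x_c is proved by evaluation in F_q((X))((Y)): with
  S_a the sum of (Y + u X + v)^(-a) over u, v in F_q, partial fractions and the power sums
  of F_q (the sum of c^(-m) over c \<noteq> 0 is -1 if q - 1 divides m and 0 otherwise) give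
  S_a S_b = S_(a+b) + \<Sum>_j \<Delta>^j_(a,b) (P_j + 1) S_(a+b-j), with P_j the sum of (X + v)^(-j).
  This is exactly the shape of x_a \<diamond> x_b, so both sides evaluate to S_a S_b S_c, and the
  evaluation is injective on the short words that occur.\<close>

unbundle fps_syntax


section \<open>Finitely supported vectors\<close>

lemma sum_apply: "(sum f A) x = (\<Sum>a\<in>A. f a x)"
  by (induct A rule: infinite_finite_induct) auto

lemma zero_fun_eta [simp]: "(\<lambda>a. 0) = (0::'k::zero vec)"
  by (simp add: zero_fun_def)

lemma plus_fun_eta [simp]: "(\<lambda>a. f a + g a) = (f + g::'k::plus vec)"
  by (simp add: plus_fun_def)

definition finsupp :: "'k::zero vec \<Rightarrow> bool" where
  "finsupp v \<longleftrightarrow> finite (supp v)"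

lemma supp_add: "supp ((u::'k::comm_ring_1 vec) + v) \<subseteq> supp u \<union> supp v"
  by (auto simp: supp_def)

lemma supp_zero [simp]: "supp (0::'k::comm_ring_1 vec) = {}"
  by (auto simp: supp_def)

lemma supp_smul: "supp (smul c (u::'k::comm_ring_1 vec)) \<subseteq> supp u"
  by (auto simp: supp_def smul_def)

lemma supp_basis: "supp (basis w :: 'k::comm_ring_1 vec) = {w}"
  by (auto simp: supp_def basis_def)

lemma supp_sum:
  "finite I \<Longrightarrow> supp (\<Sum>i\<in>I. (f i :: 'k::comm_ring_1 vec)) \<subseteq> (\<Union>i\<in>I. supp (f i))"
proof (induct I rule: finite_induct)
  case (insert x F)
  have "supp (sum f (insert x F)) = supp (f x + sum f F)" using insert by simp
  also have "\<dots> \<subseteq> supp (f x) \<union> supp (sum f F)" by (rule supp_add)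
  also have "\<dots> \<subseteq> (\<Union>i\<in>insert x F. supp (f i))" using insert by auto
  finally show ?case .
qed auto

lemma supp_pre: "supp (pre l v) = Cons l ` supp v"
proof (rule set_eqI)
  fix x show "x \<in> supp (pre l v) \<longleftrightarrow> x \<in> Cons l ` supp v"
    by (cases x) (auto simp: supp_def pre_def)
qed

lemma finsupp_add [simp, intro]: "finsupp u \<Longrightarrow> finsupp v \<Longrightarrow> finsupp ((u::'k::comm_ring_1 vec) + v)"
  unfolding finsupp_def using supp_add finite_subset by blast

lemma finsupp_zero [simp, intro]: "finsupp (0::'k::comm_ring_1 vec)"
  unfolding finsupp_def by simp

lemma finsupp_smul [simp, intro]: "finsupp u \<Longrightarrow> finsupp (smul c (u::'k::comm_ring_1 vec))"
  unfolding finsupp_def using supp_smul finite_subset by blast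

lemma finsupp_basis [simp, intro]: "finsupp (basis w :: 'k::comm_ring_1 vec)"
  unfolding finsupp_def by (simp add: supp_basis)

lemma finsupp_sum [simp, intro]:
  "finite I \<Longrightarrow> (\<And>i. i \<in> I \<Longrightarrow> finsupp (f i)) \<Longrightarrow> finsupp (\<Sum>i\<in>I. (f i :: 'k::comm_ring_1 vec))"
  by (induct I rule: finite_induct) simp_all

lemma finsupp_pre [simp, intro]: "finsupp v \<Longrightarrow> finsupp (pre l v)"
  unfolding finsupp_def by (simp add: supp_pre)

lemma pre_add: "pre l (u + v) = pre l u + pre l (v::'k::comm_ring_1 vec)"
  by (rule ext) (simp add: pre_def split: list.splits)

lemma pre_smul: "pre l (smul c u) = smul c (pre l (u::'k::comm_ring_1 vec))"
  by (rule ext) (simp add: pre_def smul_def split: list.splits)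

lemma pre_basis [simp]: "pre l (basis w) = (basis (l # w) :: 'k::comm_ring_1 vec)"
  by (rule ext) (simp add: pre_def basis_def split: list.splits)

lemma smul_add: "smul c (u + v) = smul c u + smul c (v::'k::comm_ring_1 vec)"
  by (rule ext) (simp add: smul_def algebra_simps)

lemma smul_smul: "smul c (smul d u) = smul (c * d) (u::'k::comm_ring_1 vec)"
  by (rule ext) (simp add: smul_def algebra_simps)

lemma smul_zero [simp]: "smul c 0 = (0::'k::comm_ring_1 vec)"
  by (rule ext) (simp add: smul_def)

lemma smul_zero_left [simp]: "smul 0 u = (0::'k::comm_ring_1 vec)"
  by (rule ext) (simp add: smul_def)

lemma smul_sum:
  "finite I \<Longrightarrow> smul c (\<Sum>i\<in>I. f i) = (\<Sum>i\<in>I. smul c (f i :: 'k::comm_ring_1 vec))"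
  by (induct I rule: finite_induct) (simp_all add: smul_add)

lemma vec_eq_sum_basis:
  assumes "finsupp (u::'k::comm_ring_1 vec)"
  shows "u = (\<Sum>a\<in>supp u. smul (u a) (basis a))"
proof (rule ext)
  fix z
  have "(\<Sum>a\<in>supp u. smul (u a) (basis a)) z = (\<Sum>a\<in>supp u. u a * (if z = a then 1 else 0))"
    by (simp add: sum_apply smul_def basis_def)
  also have "\<dots> = u z"
    using assms by (auto simp: finsupp_def supp_def if_distrib sum.delta' cong: if_cong)
  finally show "u z = (\<Sum>a\<in>supp u. smul (u a) (basis a)) z" by simp
qed

definition fs_linear :: "('k::comm_ring_1 vec \<Rightarrow> 'k vec) \<Rightarrow> bool" where
  "fs_linear L \<longleftrightarrow>
     (\<forall>u v. finsupp u \<longrightarrow> finsupp v \<longrightarrow> L (u + v) = L u + L v) \<and>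
     (\<forall>c u. finsupp u \<longrightarrow> L (smul c u) = smul c (L u))"

lemma fs_linear_add: "fs_linear L \<Longrightarrow> finsupp u \<Longrightarrow> finsupp v \<Longrightarrow> L (u + v) = L u + L v"
  by (simp add: fs_linear_def)

lemma fs_linear_smul: "fs_linear L \<Longrightarrow> finsupp u \<Longrightarrow> L (smul c u) = smul c (L u)"
  by (simp add: fs_linear_def)

lemma fs_linear_zero: "fs_linear L \<Longrightarrow> L 0 = 0"
  using fs_linear_smul[of L 0 0] by simp

lemma fs_linear_sum:
  "finite I \<Longrightarrow> fs_linear L \<Longrightarrow> (\<And>i. i \<in> I \<Longrightarrow> finsupp (f i)) \<Longrightarrow>
    L (\<Sum>i\<in>I. f i) = (\<Sum>i\<in>I. L (f i))"
  by (induct I rule: finite_induct) (simp_all add: fs_linear_add fs_linear_zero)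

lemma fs_linear_eq_sum_basis:
  assumes "fs_linear L" "finsupp u"
  shows "L u = (\<Sum>a\<in>supp u. smul (u a) (L (basis a)))"
proof -
  have "L u = L (\<Sum>a\<in>supp u. smul (u a) (basis a))"
    using vec_eq_sum_basis[OF assms(2)] by simp
  also have "\<dots> = (\<Sum>a\<in>supp u. smul (u a) (L (basis a)))"
    using assms(1) assms(2)[unfolded finsupp_def]
    by (subst fs_linear_sum) (simp_all add: fs_linear_smul)
  finally show ?thesis .
qed

lemma fs_linear_eqI:
  assumes "fs_linear L" "fs_linear R" "finsupp u" "\<And>a. a \<in> supp u \<Longrightarrow> L (basis a) = R (basis a)"
  shows "L u = R u"
  using assms fs_linear_eq_sum_basis[of L u] fs_linear_eq_sum_basis[of R u]
  by (metis (no_types, lifting) sum.cong)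

lemma fs_linear_pre: "fs_linear (pre l)"
  by (simp add: fs_linear_def pre_add pre_smul)

lemma fs_linear_id: "fs_linear (\<lambda>x. x)"
  by (simp add: fs_linear_def)

lemma fs_linear_comp:
  "fs_linear L \<Longrightarrow> fs_linear R \<Longrightarrow> (\<And>u. finsupp u \<Longrightarrow> finsupp (R u)) \<Longrightarrow> fs_linear (\<lambda>x. L (R x))"
  by (simp add: fs_linear_def)

lemma fs_linear_plus: "fs_linear L \<Longrightarrow> fs_linear R \<Longrightarrow> fs_linear (\<lambda>x. L x + R x)"
  by (simp add: fs_linear_def smul_add algebra_simps)

lemma fs_linear_scale: "fs_linear L \<Longrightarrow> fs_linear (\<lambda>x. smul c (L x))"
  by (simp add: fs_linear_def smul_add smul_smul mult.commute)

lemma fs_linear_sum_fun: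
  "finite I \<Longrightarrow> (\<And>i. i \<in> I \<Longrightarrow> fs_linear (L i)) \<Longrightarrow> fs_linear (\<lambda>x. \<Sum>i\<in>I. L i x)"
  by (simp add: fs_linear_def sum.distrib smul_sum)

lemma lin_ext_eq_sum:
  fixes v :: "'k::comm_ring_1 vec"
  assumes "finite A" "supp v \<subseteq> A"
  shows "lin_ext f v = (\<lambda>z. \<Sum>a\<in>A. v a * f a z)"
  unfolding lin_ext_def using assms
  by (intro ext sum.mono_neutral_left) (auto simp: supp_def)

lemma bil_ext_eq_sum:
  fixes u v :: "'k::comm_ring_1 vec"
  assumes "finite A" "supp u \<subseteq> A" "finite B" "supp v \<subseteq> B"
  shows "bil_ext f u v = (\<lambda>z. \<Sum>a\<in>A. \<Sum>b\<in>B. u a * v b * f a b z)"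
proof (rule ext)
  fix z
  have fu: "finite (supp u)" "finite (supp v)" using assms finite_subset by auto
  have "(\<Sum>a\<in>A. \<Sum>b\<in>B. u a * v b * f a b z) = (\<Sum>a\<in>supp u. \<Sum>b\<in>B. u a * v b * f a b z)"
    using assms fu by (intro sum.mono_neutral_right) (auto simp: supp_def)
  also have "\<dots> = (\<Sum>a\<in>supp u. \<Sum>b\<in>supp v. u a * v b * f a b z)"
    using assms fu by (intro sum.cong refl sum.mono_neutral_right) (auto simp: supp_def)
  finally show "bil_ext f u v z = (\<Sum>a\<in>A. \<Sum>b\<in>B. u a * v b * f a b z)"
    by (simp add: bil_ext_def)
qed

lemma fs_linear_lin_ext: "fs_linear (lin_ext f)"
  unfolding fs_linear_def
proof (intro conjI allI impI)
  fix u v :: "'a vec" assume "finsupp u" "finsupp v"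
  then have fin: "finite (supp u \<union> supp v)" by (simp add: finsupp_def)
  have "supp (u + v) \<subseteq> supp u \<union> supp v" by (rule supp_add)
  then show "lin_ext f (u + v) = lin_ext f u + lin_ext f v"
    by (simp add: lin_ext_eq_sum[OF fin] fun_eq_iff algebra_simps sum.distrib)
next
  fix c and u :: "'a vec" assume "finsupp u"
  then have fin: "finite (supp u)" by (simp add: finsupp_def)
  have "supp (smul c u) \<subseteq> supp u" by (rule supp_smul)
  then show "lin_ext f (smul c u) = smul c (lin_ext f u)"
    by (simp add: lin_ext_eq_sum[OF fin] fun_eq_iff smul_def sum_distrib_left algebra_simps)
qed

lemma lin_ext_basis [simp]: "lin_ext f (basis w) = f w"
  by (rule ext) (simp add: lin_ext_def supp_basis, simp add: basis_def)

lemma supp_lin_ext: "supp (lin_ext f v) \<subseteq> (\<Union>a\<in>supp v. supp (f a))"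
  unfolding lin_ext_def supp_def
  by (auto elim!: sum.not_neutral_contains_not_neutral)

lemma finsupp_lin_ext [intro]:
  "finsupp v \<Longrightarrow> (\<And>a. a \<in> supp v \<Longrightarrow> finsupp (f a)) \<Longrightarrow> finsupp (lin_ext f v)"
  unfolding finsupp_def using supp_lin_ext by (metis (no_types, lifting) finite_UN_I finite_subset)

lemma fs_linear_bil_ext_left: "finsupp v \<Longrightarrow> fs_linear (\<lambda>u. bil_ext f u v)"
  unfolding fs_linear_def
proof (intro conjI allI impI)
  fix u1 u2 :: "'a vec" assume "finsupp u1" "finsupp u2" "finsupp v"
  then have fin: "finite (supp u1 \<union> supp u2)" "finite (supp v)" by (auto simp: finsupp_def)
  have "supp (u1 + u2) \<subseteq> supp u1 \<union> supp u2" by (rule supp_add)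
  then show "bil_ext f (u1 + u2) v = bil_ext f u1 v + bil_ext f u2 v"
    by (simp add: bil_ext_eq_sum[OF fin(1) _ fin(2)] fun_eq_iff algebra_simps sum.distrib)
next
  fix c and u :: "'a vec" assume "finsupp u" "finsupp v"
  then have fin: "finite (supp u)" "finite (supp v)" by (auto simp: finsupp_def)
  have "supp (smul c u) \<subseteq> supp u" by (rule supp_smul)
  then show "bil_ext f (smul c u) v = smul c (bil_ext f u v)"
    by (simp add: bil_ext_eq_sum[OF fin(1) _ fin(2)] fun_eq_iff smul_def sum_distrib_left algebra_simps)
qed

lemma fs_linear_bil_ext_right: "finsupp u \<Longrightarrow> fs_linear (\<lambda>v. bil_ext f u v)"
  unfolding fs_linear_def
proof (intro conjI allI impI)
  fix v1 v2 :: "'a vec" assume "finsupp v1" "finsupp v2" "finsupp u"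
  then have fin: "finite (supp u)" "finite (supp v1 \<union> supp v2)" by (auto simp: finsupp_def)
  have "supp (v1 + v2) \<subseteq> supp v1 \<union> supp v2" by (rule supp_add)
  then show "bil_ext f u (v1 + v2) = bil_ext f u v1 + bil_ext f u v2"
    by (simp add: bil_ext_eq_sum[OF fin(1) _ fin(2)] fun_eq_iff algebra_simps sum.distrib)
next
  fix c and v :: "'a vec" assume "finsupp u" "finsupp v"
  then have fin: "finite (supp u)" "finite (supp v)" by (auto simp: finsupp_def)
  have "supp (smul c v) \<subseteq> supp v" by (rule supp_smul)
  then show "bil_ext f u (smul c v) = smul c (bil_ext f u v)"
    by (simp add: bil_ext_eq_sum[OF fin(1) _ fin(2)] fun_eq_iff smul_def sum_distrib_left algebra_simps)
qed

lemma bil_ext_basis [simp]: "bil_ext f (basis a) (basis b) = f a b"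
  by (rule ext) (simp add: bil_ext_def supp_basis, simp add: basis_def)

lemma supp_bil_ext: "supp (bil_ext f u v) \<subseteq> (\<Union>a\<in>supp u. \<Union>b\<in>supp v. supp (f a b))"
  unfolding bil_ext_def supp_def
  by (auto elim!: sum.not_neutral_contains_not_neutral) (metis mult_zero_right)

lemma finsupp_bil_ext [intro]:
  "finsupp u \<Longrightarrow> finsupp v \<Longrightarrow> (\<And>a b. a \<in> supp u \<Longrightarrow> b \<in> supp v \<Longrightarrow> finsupp (f a b)) \<Longrightarrow>
    finsupp (bil_ext f u v)"
  unfolding finsupp_def using supp_bil_ext
  by (metis (no_types, lifting) finite_UN_I finite_subset)

section \<open>Shuffle and diamond products of vectors\<close>

lemma lsh_eq_sh_w: "lsh k w = sh_w [(k, 1)] w"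
proof (induct w)
  case (Cons p w)
  then show ?case by (cases p) (simp add: dm_step_def)
qed simp

lemma finsupp_lsh [simp, intro]: "finsupp (lsh k w :: 'k::{finite,field} vec)"
proof (induct w arbitrary: k)
  case (Cons p w)
  then show ?case by (cases p) simp
qed simp

lemma finsupp_dm_step [simp, intro]: "finsupp s \<Longrightarrow> finsupp (dm_step x y (s :: 'k::{finite,field} vec))"
  by (cases x, cases y)
    (auto simp: dm_step_def intro!: finsupp_add finsupp_sum finsupp_smul finsupp_pre finsupp_lin_ext)

lemma finsupp_sh_w [simp, intro]: "finsupp (sh_w a b :: 'k::{finite,field} vec)"
  by (induct a b rule: sh_w.induct) auto

lemma finsupp_dm_w [simp, intro]: "finsupp (dm_w a b :: 'k::{finite,field} vec)"
  by (induct a b rule: dm_w.induct) auto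

lemma finsupp_shuffle [simp, intro]:
  "finsupp A \<Longrightarrow> finsupp B \<Longrightarrow> finsupp (shuffle A (B :: 'k::{finite,field} vec))"
  unfolding shuffle_def by (rule finsupp_bil_ext) auto

lemma finsupp_diamond [simp, intro]:
  "finsupp A \<Longrightarrow> finsupp B \<Longrightarrow> finsupp (diamond A (B :: 'k::{finite,field} vec))"
  unfolding diamond_def by (rule finsupp_bil_ext) auto

lemma shuffle_basis [simp]: "shuffle (basis a) (basis b) = (sh_w a b :: 'k::{finite,field} vec)"
  by (simp add: shuffle_def)

lemma diamond_basis [simp]: "diamond (basis a) (basis b) = (dm_w a b :: 'k::{finite,field} vec)"
  by (simp add: diamond_def)

lemma fs_linear_shuffle_left: "finsupp B \<Longrightarrow> fs_linear (\<lambda>A. shuffle A (B :: 'k::{finite,field} vec))"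
  unfolding shuffle_def by (rule fs_linear_bil_ext_left)

lemma fs_linear_shuffle_right: "finsupp A \<Longrightarrow> fs_linear (\<lambda>B. shuffle A (B :: 'k::{finite,field} vec))"
  unfolding shuffle_def by (rule fs_linear_bil_ext_right)

lemma fs_linear_diamond_left: "finsupp B \<Longrightarrow> fs_linear (\<lambda>A. diamond A (B :: 'k::{finite,field} vec))"
  unfolding diamond_def by (rule fs_linear_bil_ext_left)

lemma fs_linear_diamond_right: "finsupp A \<Longrightarrow> fs_linear (\<lambda>B. diamond A (B :: 'k::{finite,field} vec))"
  unfolding diamond_def by (rule fs_linear_bil_ext_right)

lemma shuffle_add_left:
  "finsupp A1 \<Longrightarrow> finsupp A2 \<Longrightarrow> finsupp B \<Longrightarrow>
    shuffle (A1 + A2) B = shuffle A1 B + shuffle A2 (B :: 'k::{finite,field} vec)"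
  using fs_linear_add[OF fs_linear_shuffle_left[of B], of A1 A2] by simp

lemma shuffle_add_right:
  "finsupp A \<Longrightarrow> finsupp B1 \<Longrightarrow> finsupp B2 \<Longrightarrow>
    shuffle A (B1 + B2) = shuffle A B1 + shuffle A (B2 :: 'k::{finite,field} vec)"
  using fs_linear_add[OF fs_linear_shuffle_right[of A], of B1 B2] by simp

lemma shuffle_unit_left: "finsupp B \<Longrightarrow> shuffle (basis []) B = (B :: 'k::{finite,field} vec)"
  using fs_linear_eqI[OF fs_linear_shuffle_right[of "basis []"] fs_linear_id, of B] by simp

lemma shuffle_unit_right: "finsupp A \<Longrightarrow> shuffle A (basis []) = (A :: 'k::{finite,field} vec)"
proof -
  have "sh_w a [] = (basis a :: 'k vec)" for a by (cases a) auto
  then show "finsupp A \<Longrightarrow> ?thesis"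
    using fs_linear_eqI[OF fs_linear_shuffle_left[of "basis []"] fs_linear_id, of A] by simp
qed

lemma diamond_unit_left: "finsupp B \<Longrightarrow> diamond (basis []) B = (B :: 'k::{finite,field} vec)"
  using fs_linear_eqI[OF fs_linear_diamond_right[of "basis []"] fs_linear_id, of B] by simp

lemma diamond_unit_right: "finsupp A \<Longrightarrow> diamond A (basis []) = (A :: 'k::{finite,field} vec)"
proof -
  have "dm_w a [] = (basis a :: 'k vec)" for a by (cases a) auto
  then show "finsupp A \<Longrightarrow> ?thesis"
    using fs_linear_eqI[OF fs_linear_diamond_left[of "basis []"] fs_linear_id, of A] by simp
qed

lemma lin_ext_lsh_eq_shuffle:
  "finsupp S \<Longrightarrow> lin_ext (lsh k) S = shuffle (basis [(k, 1)]) (S :: 'k::{finite,field} vec)"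
  using fs_linear_eqI[OF fs_linear_lin_ext fs_linear_shuffle_right[of "basis [(k, 1)]"], of S]
  by (simp add: lsh_eq_sh_w)

lemma fs_linear_dm_step: "fs_linear (dm_step x (y :: 'k::{finite,field} letter))"
proof -
  obtain a \<alpha> b \<beta> where xy: "x = (a, \<alpha>)" "y = (b, \<beta>)" by (cases x, cases y)
  show ?thesis unfolding xy dm_step_def
    by (auto intro!: fs_linear_plus fs_linear_pre fs_linear_sum_fun fs_linear_scale
        fs_linear_comp[OF fs_linear_pre] fs_linear_lin_ext)
qed

lemma shuffle_pre_pre:
  assumes A: "finsupp A" and B: "finsupp B"
  shows "shuffle (pre x A) (pre y B) =
    pre x (shuffle A (pre y B)) + pre y (shuffle (pre x A) B) + dm_step x y (shuffle A (B :: 'k::{finite,field} vec))"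
proof -
  have basis_left: "shuffle (pre x (basis a)) (pre y B) =
    pre x (shuffle (basis a) (pre y B)) + pre y (shuffle (pre x (basis a)) B) + dm_step x y (shuffle (basis a) B)"
    for a
  proof -
    have L: "fs_linear (\<lambda>B. shuffle (pre x (basis a)) (pre y B))"
      by (rule fs_linear_comp[OF fs_linear_shuffle_right fs_linear_pre]) auto
    have R: "fs_linear (\<lambda>B. pre x (shuffle (basis a) (pre y B)) + pre y (shuffle (pre x (basis a)) B)
        + dm_step x y (shuffle (basis a) B))"
      by (intro fs_linear_plus fs_linear_comp[OF fs_linear_pre] fs_linear_comp[OF fs_linear_dm_step]
          fs_linear_comp[OF fs_linear_shuffle_right] fs_linear_shuffle_right fs_linear_pre) auto
    show ?thesis using fs_linear_eqI[OF L R B] by simp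
  qed
  have L: "fs_linear (\<lambda>A. shuffle (pre x A) (pre y B))"
    using B by (intro fs_linear_comp[OF fs_linear_shuffle_left fs_linear_pre]) auto
  have R: "fs_linear (\<lambda>A. pre x (shuffle A (pre y B)) + pre y (shuffle (pre x A) B) + dm_step x y (shuffle A B))"
    using B by (intro fs_linear_plus fs_linear_comp[OF fs_linear_pre] fs_linear_comp[OF fs_linear_dm_step]
        fs_linear_comp[OF fs_linear_shuffle_left] fs_linear_shuffle_left fs_linear_pre) auto
  show ?thesis using fs_linear_eqI[OF L R A] basis_left by simp
qed

lemma diamond_pre_pre:
  assumes A: "finsupp A" and B: "finsupp B"
  shows "diamond (pre x A) (pre y B) = dm_step x y (shuffle A (B :: 'k::{finite,field} vec))"
proof -
  have basis_left: "diamond (pre x (basis a)) (pre y B) = dm_step x y (shuffle (basis a) B)" for a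
  proof -
    have L: "fs_linear (\<lambda>B. diamond (pre x (basis a)) (pre y B))"
      by (rule fs_linear_comp[OF fs_linear_diamond_right fs_linear_pre]) auto
    have R: "fs_linear (\<lambda>B. dm_step x y (shuffle (basis a) B))"
      by (intro fs_linear_comp[OF fs_linear_dm_step] fs_linear_shuffle_right) auto
    show ?thesis using fs_linear_eqI[OF L R B] by simp
  qed
  have L: "fs_linear (\<lambda>A. diamond (pre x A) (pre y B))"
    using B by (intro fs_linear_comp[OF fs_linear_diamond_left fs_linear_pre]) auto
  have R: "fs_linear (\<lambda>A. dm_step x y (shuffle A B))"
    using B by (intro fs_linear_comp[OF fs_linear_dm_step] fs_linear_shuffle_left) auto
  show ?thesis using fs_linear_eqI[OF L R A] basis_left by simp
qed

lemma Delta_commute: "Delta a b k = Delta b a k"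
  by (simp add: Delta_def add.commute)

lemma dm_step_commute: "dm_step (x :: 'k::{finite,field} letter) y s = dm_step y x s"
  by (cases x, cases y) (simp add: dm_step_def Delta_commute add.commute mult.commute)

lemma sh_w_commute: "sh_w a b = (sh_w b a :: 'k::{finite,field} vec)"
proof (induct a b rule: sh_w.induct)
  case (1 b)
  then show ?case by (cases b) auto
next
  case (3 x a y b)
  then show ?case by (simp add: dm_step_commute add.commute add.left_commute)
qed simp

lemma shuffle_commute:
  assumes A: "finsupp A" and B: "finsupp B"
  shows "shuffle A B = shuffle B (A :: 'k::{finite,field} vec)"
proof -
  have "shuffle (basis a) B = shuffle B (basis a)" for a
    using fs_linear_eqI[OF fs_linear_shuffle_right fs_linear_shuffle_left B, of "basis a" "basis a"]
    by (simp add: sh_w_commute)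
  then show ?thesis using fs_linear_eqI[OF fs_linear_shuffle_left fs_linear_shuffle_right A, of B B] B
    by simp
qed

text \<open>Applied to the shuffle S of the tails, the diamond product of the letters x and y is
  dm_split x y H with H l r = l (r \<sqcup>\<sqcup> S), where r = [] or r is a one-letter word [(k, 1)].\<close>

definition dm_tail :: "'k::one word \<Rightarrow> bool" where
  "dm_tail r \<longleftrightarrow> r = [] \<or> (\<exists>j. 1 \<le> j \<and> r = [(j, 1)])"

lemma dm_tail_simps [simp]: "dm_tail []" "1 \<le> j \<Longrightarrow> dm_tail [(j, 1)]"
  by (auto simp: dm_tail_def)

definition dm_split ::
  "'k letter \<Rightarrow> 'k letter \<Rightarrow> ('k letter \<Rightarrow> 'k word \<Rightarrow> 'k vec) \<Rightarrow> 'k::{finite,field} vec" where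
  "dm_split x y H = (case x of (a, \<alpha>) \<Rightarrow> case y of (b, \<beta>) \<Rightarrow>
     H (a + b, \<alpha> * \<beta>) [] + (\<Sum>k\<in>{1..<a + b}. smul (Delta a b k) (H (a + b - k, \<alpha> * \<beta>) [(k, 1)])))"

lemma dm_step_eq_dm_split:
  "finsupp S \<Longrightarrow> dm_step x y S = dm_split x y (\<lambda>l r. pre l (shuffle (basis r) (S :: 'k::{finite,field} vec)))"
  by (cases x, cases y) (simp add: dm_step_def dm_split_def shuffle_unit_left lin_ext_lsh_eq_shuffle)

lemma fs_linear_dm_split:
  "fs_linear L \<Longrightarrow> (\<And>l r. finsupp (H l r)) \<Longrightarrow> L (dm_split x y H) = dm_split x y (\<lambda>l r. L (H l r))"
  by (cases x, cases y) (simp add: dm_split_def fs_linear_add fs_linear_sum fs_linear_smul)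

lemma finsupp_dm_split [simp, intro]: "(\<And>l r. finsupp (H l r)) \<Longrightarrow> finsupp (dm_split x y H)"
  by (cases x, cases y) (simp add: dm_split_def)

lemma dm_split_add: "dm_split x y (\<lambda>l r. H1 l r + H2 l r) = dm_split x y H1 + dm_split x y H2"
  by (cases x, cases y) (simp add: dm_split_def smul_add sum.distrib algebra_simps)

lemma dm_split_cong:
  assumes "1 \<le> fst x" and "\<And>l r. 1 \<le> fst l \<Longrightarrow> dm_tail r \<Longrightarrow> H l r = H' l r"
  shows "dm_split x y H = dm_split x y H'"
proof -
  obtain a \<alpha> b \<beta> where xy: "x = (a, \<alpha>)" "y = (b, \<beta>)" by (cases x, cases y)
  have "H (a + b - k, \<alpha> * \<beta>) [(k, 1)] = H' (a + b - k, \<alpha> * \<beta>) [(k, 1)]" if "k \<in> {1..<a + b}" for k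
    using that by (intro assms(2)) (auto simp: dm_tail_def)
  moreover have "H (a + b, \<alpha> * \<beta>) [] = H' (a + b, \<alpha> * \<beta>) []"
    using assms by (simp add: xy dm_tail_def)
  ultimately show ?thesis by (simp add: dm_split_def xy)
qed

section \<open>Power sums over a finite field\<close>

lemma of_nat_card_UNIV_eq_0: "of_nat (card (UNIV::'k::{finite,field} set)) = (0::'k)"
proof -
  have "(\<Sum>c\<in>UNIV. c + 1) = (\<Sum>c\<in>(UNIV::'k set). c)"
    by (rule sum.reindex_bij_witness[of _ "\<lambda>c. c - 1" "\<lambda>c. c + 1"]) auto
  then show ?thesis by (simp add: sum.distrib)
qed

lemma card_UNIV_field_ge_2: "2 \<le> card (UNIV::'k::{finite,field} set)"
proof -
  have "card {0::'k, 1} = 2" by simp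
  moreover have "card {0::'k, 1} \<le> card (UNIV::'k set)" by (rule card_mono) auto
  ultimately show ?thesis by simp
qed

lemma power_card_minus_one:
  assumes "c \<noteq> 0" shows "c ^ (card (UNIV::'k::{finite,field} set) - 1) = (1::'k)"
proof -
  let ?N = "UNIV - {0::'k}"
  have "(\<Prod>d\<in>?N. c * d) = (\<Prod>d\<in>?N. d)"
    by (rule prod.reindex_bij_witness[of _ "\<lambda>d. d / c" "\<lambda>d. c * d"]) (use assms in auto)
  then have "c ^ card ?N * (\<Prod>d\<in>?N. d) = (\<Prod>d\<in>?N. d)" by (simp add: prod.distrib)
  moreover have "(\<Prod>d\<in>?N. d) \<noteq> 0" by simp
  moreover have "card ?N = card (UNIV::'k set) - 1" by (simp add: card_Diff_singleton)
  ultimately show ?thesis by simp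
qed

lemma minus_one_power_card_dvd:
  assumes "(card (UNIV::'k::{finite,field} set) - 1) dvd j"
  shows "(-1::'k) ^ j = 1"
proof -
  from assms obtain t where "j = (card (UNIV::'k set) - 1) * t" by auto
  then show ?thesis using power_card_minus_one[of "-1::'k"] by (simp add: power_mult)
qed

lemma exists_power_ne_1:
  assumes "0 < r" "r < card (UNIV::'k::{finite,field} set) - 1"
  shows "\<exists>g::'k. g \<noteq> 0 \<and> g ^ r \<noteq> 1"
proof (rule ccontr)
  assume "\<not> ?thesis"
  then have all: "g ^ r = 1" if "g \<noteq> 0" for g :: 'k using that by blast
  define p :: "'k poly" where "p = [:-1:] + monom 1 r"
  have dp: "degree p = r" unfolding p_def
    by (subst degree_add_eq_right) (use assms in \<open>auto simp: degree_monom_eq\<close>)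
  have p0: "p \<noteq> 0" using dp assms by auto
  have "UNIV - {0::'k} \<subseteq> {x. poly p x = 0}"
    using all by (auto simp: p_def poly_monom)
  then have "card (UNIV - {0::'k}) \<le> card {x. poly p x = 0}"
    by (intro card_mono) auto
  also have "\<dots> \<le> degree p" by (rule card_poly_roots_bound[OF p0])
  finally show False using dp assms by (simp add: card_Diff_singleton)
qed

lemma sum_nonzero_power:
  "(\<Sum>c\<in>UNIV-{0::'k::{finite,field}}. c ^ j) = (if (card (UNIV::'k set) - 1) dvd j then -1 else 0)"
proof (cases "(card (UNIV::'k set) - 1) dvd j")
  case True
  then obtain t where j: "j = (card (UNIV::'k set) - 1) * t" by auto
  have "(\<Sum>c\<in>UNIV-{0::'k}. c ^ j) = (\<Sum>c\<in>UNIV-{0::'k}. 1)"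
    using power_card_minus_one[where 'k='k] by (intro sum.cong) (auto simp: j power_mult)
  also have "\<dots> = of_nat (card (UNIV::'k set)) - 1"
    using card_UNIV_field_ge_2[where 'k='k] by (simp add: card_Diff_singleton of_nat_diff)
  also have "\<dots> = -1" by (simp add: of_nat_card_UNIV_eq_0)
  finally show ?thesis using True by simp
next
  case False
  let ?Q = "card (UNIV::'k set) - 1"
  have "?Q \<ge> 1" using card_UNIV_field_ge_2[where 'k='k] by simp
  moreover have "j mod ?Q \<noteq> 0" using False by (simp add: dvd_eq_mod_eq_0)
  ultimately have "0 < j mod ?Q" "j mod ?Q < ?Q" by simp_all
  then obtain g :: 'k where g: "g \<noteq> 0" "g ^ (j mod ?Q) \<noteq> 1" using exists_power_ne_1 by blast
  have "j = ?Q * (j div ?Q) + j mod ?Q" by simp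
  then have "g ^ j = (g ^ ?Q) ^ (j div ?Q) * g ^ (j mod ?Q)" by (metis power_add power_mult)
  then have gj: "g ^ j \<noteq> 1" using g power_card_minus_one[OF g(1)] by simp
  let ?S = "(\<Sum>c\<in>UNIV-{0::'k}. c ^ j)"
  have "?S = (\<Sum>c\<in>UNIV-{0::'k}. (g * c) ^ j)"
    by (rule sum.reindex_bij_witness[of _ "\<lambda>d. g * d" "\<lambda>d. d / g"]) (use g in auto)
  also have "\<dots> = g ^ j * ?S" by (simp add: power_mult_distrib sum_distrib_left)
  finally have "(g ^ j - 1) * ?S = 0" by (simp add: algebra_simps)
  then show ?thesis using gj False by simp
qed

lemma sum_nonzero_inverse_power:
  "(\<Sum>c\<in>UNIV-{0::'k::{finite,field}}. inverse c ^ j) = (if (card (UNIV::'k set) - 1) dvd j then -1 else 0)"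
proof -
  have "(\<Sum>c\<in>UNIV-{0::'k}. inverse c ^ j) = (\<Sum>c\<in>UNIV-{0::'k}. c ^ j)"
    by (rule sum.reindex_bij_witness[of _ inverse inverse]) auto
  then show ?thesis by (simp add: sum_nonzero_power)
qed

section \<open>Partial fractions\<close>

lemma binomial_partial_sum:
  fixes x y :: "'a::comm_ring_1"
  assumes xy: "x + y = 1"
  shows "(\<Sum>k<a. of_nat ((a + b') choose k) * x ^ k * y ^ (a + b' - k)) = y ^ Suc b' * (\<Sum>k<a. of_nat ((b' + k) choose k) * x ^ k)"
proof (induct a)
  case 0
  then show ?case by simp
next
  case (Suc a)
  let ?m = "a + b'"
  let ?G = "\<lambda>a. (\<Sum>k<a. of_nat ((a + b') choose k) * x ^ k * y ^ (a + b' - k))"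
  have pascal: "of_nat (Suc ?m choose k) = (of_nat (?m choose k) :: 'a) + (if k = 0 then 0 else of_nat (?m choose (k - 1)))" for k
    by (cases k) auto
  have "?G (Suc a) = (\<Sum>k<Suc a. of_nat (Suc ?m choose k) * x ^ k * y ^ (Suc ?m - k))" by simp
  also have "\<dots> = (\<Sum>k<Suc a. of_nat (?m choose k) * x ^ k * y ^ (Suc ?m - k))
      + (\<Sum>k<Suc a. (if k = 0 then 0 else of_nat (?m choose (k - 1))) * x ^ k * y ^ (Suc ?m - k))"
    by (simp add: pascal algebra_simps sum.distrib)
  also have "(\<Sum>k<Suc a. of_nat (?m choose k) * x ^ k * y ^ (Suc ?m - k)) = y * (?G a + of_nat (?m choose a) * x ^ a * y ^ b')"
  proof -
    have "(\<Sum>k<Suc a. of_nat (?m choose k) * x ^ k * y ^ (Suc ?m - k)) = (\<Sum>k<Suc a. y * (of_nat (?m choose k) * x ^ k * y ^ (?m - k)))"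
      by (rule sum.cong) (auto simp: Suc_diff_le)
    also have "\<dots> = y * (\<Sum>k<Suc a. of_nat (?m choose k) * x ^ k * y ^ (?m - k))" by (rule sum_distrib_left[symmetric])
    also have "\<dots> = y * (?G a + of_nat (?m choose a) * x ^ a * y ^ b')" by simp
    finally show ?thesis .
  qed
  also have "(\<Sum>k<Suc a. (if k = 0 then 0 else of_nat (?m choose (k - 1))) * x ^ k * y ^ (Suc ?m - k)) = x * ?G a"
  proof -
    have "(\<Sum>k<Suc a. (if k = 0 then 0 else of_nat (?m choose (k - 1))) * x ^ k * y ^ (Suc ?m - k))
        = (\<Sum>k<a. of_nat (?m choose k) * x ^ Suc k * y ^ (Suc ?m - Suc k))"
      by (subst sum.lessThan_Suc_shift) simp
    also have "\<dots> = x * ?G a" by (simp add: sum_distrib_left algebra_simps)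
    finally show ?thesis .
  qed
  finally have "?G (Suc a) = (x + y) * ?G a + of_nat (?m choose a) * x ^ a * y ^ Suc b'"
    by (simp add: algebra_simps)
  then show ?case using Suc xy by (simp add: algebra_simps add.commute)
qed

lemma banach_identity:
  fixes x y :: "'a::comm_ring_1"
  assumes xy: "x + y = 1" and a: "1 \<le> a" and b: "1 \<le> b"
  shows "y ^ b * (\<Sum>k<a. of_nat ((b - 1 + k) choose k) * x ^ k) + x ^ a * (\<Sum>k<b. of_nat ((a - 1 + k) choose k) * y ^ k) = 1"
proof -
  obtain b' where b': "b = Suc b'" using b by (cases b) auto
  obtain a' where a': "a = Suc a'" using a by (cases a) auto
  let ?n = "a + b'"
  have n2: "?n = b + a'" using a' b' by simp
  have G: "(\<Sum>k<a. of_nat (?n choose k) * x ^ k * y ^ (?n - k)) = y ^ b * (\<Sum>k<a. of_nat ((b - 1 + k) choose k) * x ^ k)"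
    using binomial_partial_sum[OF xy, of a b'] b' by simp
  have H: "(\<Sum>k<b. of_nat (?n choose k) * y ^ k * x ^ (?n - k)) = x ^ a * (\<Sum>k<b. of_nat ((a - 1 + k) choose k) * y ^ k)"
    using binomial_partial_sum[of y x b a'] xy a' b' by (simp add: add.commute n2)
  have "1 = (x + y) ^ ?n" using xy by simp
  also have "\<dots> = (\<Sum>k\<le>?n. of_nat (?n choose k) * x ^ k * y ^ (?n - k))" by (simp add: binomial_ring)
  also have "\<dots> = (\<Sum>k\<in>{..<a}. of_nat (?n choose k) * x ^ k * y ^ (?n - k)) + (\<Sum>k\<in>{a..?n}. of_nat (?n choose k) * x ^ k * y ^ (?n - k))"
  proof -
    have "{..?n} = {..<a} \<union> {a..?n}" by auto
    then show ?thesis by (simp add: sum.union_disjoint ivl_disj_int)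
  qed
  also have "(\<Sum>k\<in>{a..?n}. of_nat (?n choose k) * x ^ k * y ^ (?n - k)) = (\<Sum>k<b. of_nat (?n choose k) * y ^ k * x ^ (?n - k))"
    apply (rule sum.reindex_bij_witness[of _ "\<lambda>k. ?n - k" "\<lambda>k. ?n - k"])
    using a' b' by (auto simp: binomial_symmetric[symmetric] mult.commute mult.left_commute)
  finally show ?thesis using G H by simp
qed


lemma inverse_power_mult_power:
  "(u::'f::field) \<noteq> 0 \<Longrightarrow> i \<le> a \<Longrightarrow> inverse u ^ a * u ^ i = inverse u ^ (a - i)"
proof -
  assume u: "u \<noteq> 0" and ia: "i \<le> a"
  have "inverse u ^ a = inverse u ^ (a - i) * inverse u ^ i" using ia by (simp flip: power_add)
  moreover have "inverse u ^ i * u ^ i = 1" using u by (simp flip: power_mult_distrib)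
  ultimately show ?thesis by (simp add: mult.assoc)
qed

definition pf_part :: "nat \<Rightarrow> nat \<Rightarrow> 'f::field \<Rightarrow> 'f \<Rightarrow> 'f" where
  "pf_part a b u v =
     (\<Sum>i<a. of_nat ((b - 1 + i) choose i) * (-1) ^ i * inverse (v - u) ^ (b + i) * inverse u ^ (a - i))"

lemma inverse_powers_mult_ratio_powers:
  fixes u v :: "'f::field"
  assumes u: "u \<noteq> 0" and v: "v \<noteq> 0" and k: "k \<le> a"
  shows "inverse u ^ a * inverse v ^ b * ((v / (v - u)) ^ b * (u / (u - v)) ^ k)
    = (-1) ^ k * inverse (v - u) ^ (b + k) * inverse u ^ (a - k)"
proof -
  have "inverse v * (v / (v - u)) = inverse (v - u)"
    using v by (simp add: divide_inverse)
  then have V: "inverse v ^ b * (v / (v - u)) ^ b = inverse (v - u) ^ b"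
    by (metis power_mult_distrib)
  have "u / (u - v) = (-1) * inverse (v - u) * u"
    by (simp add: divide_inverse flip: inverse_minus_eq)
  then have "(u / (u - v)) ^ k = (-1) ^ k * inverse (v - u) ^ k * u ^ k"
    by (simp only: power_mult_distrib)
  then have U: "inverse u ^ a * (u / (u - v)) ^ k = (-1) ^ k * inverse (v - u) ^ k * inverse u ^ (a - k)"
    using inverse_power_mult_power[OF u k] by (simp add: mult_ac)
  have "inverse u ^ a * inverse v ^ b * ((v / (v - u)) ^ b * (u / (u - v)) ^ k)
      = (inverse v ^ b * (v / (v - u)) ^ b) * (inverse u ^ a * (u / (u - v)) ^ k)"
    by (simp only: mult_ac)
  also have "\<dots> = (-1) ^ k * inverse (v - u) ^ (b + k) * inverse u ^ (a - k)"
    unfolding V U by (simp only: power_add mult_ac)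
  finally show ?thesis .
qed

text \<open>Multiply Banach's identity for x = u/(u-v), y = v/(v-u) by 1/(u^a v^b).\<close>

lemma inverse_powers_partial_fraction:
  fixes u v :: "'f::field"
  assumes u: "u \<noteq> 0" and v: "v \<noteq> 0" and uv: "u \<noteq> v" and a: "1 \<le> a" and b: "1 \<le> b"
  shows "inverse u ^ a * inverse v ^ b = pf_part a b u v + pf_part b a v u"
proof -
  define x where "x = u / (u - v)"
  define y where "y = v / (v - u)"
  have "y = - v / (u - v)"
    unfolding y_def by (metis divide_minus_right minus_diff_eq minus_divide_left)
  then have xy: "x + y = 1" using uv by (simp add: x_def flip: diff_divide_distrib)
  have "inverse u ^ a * inverse v ^ b = inverse u ^ a * inverse v ^ b *
      (y ^ b * (\<Sum>k<a. of_nat ((b - 1 + k) choose k) * x ^ k) + x ^ a * (\<Sum>k<b. of_nat ((a - 1 + k) choose k) * y ^ k))"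
    using banach_identity[OF xy a b] by simp
  also have "\<dots> = (\<Sum>k<a. of_nat ((b - 1 + k) choose k) * (inverse u ^ a * inverse v ^ b * (y ^ b * x ^ k)))
      + (\<Sum>k<b. of_nat ((a - 1 + k) choose k) * (inverse v ^ b * inverse u ^ a * (x ^ a * y ^ k)))"
    by (simp add: distrib_left sum_distrib_left algebra_simps)
  also have "\<dots> = pf_part a b u v + pf_part b a v u"
    unfolding pf_part_def x_def y_def
    using inverse_powers_mult_ratio_powers[OF u v, of _ a b] inverse_powers_mult_ratio_powers[OF v u, of _ b a]
    by (intro arg_cong2[where f = "(+)"] sum.cong refl) (simp_all only: lessThan_iff less_imp_le mult_ac)
  finally show ?thesis .
qed

section \<open>Inverse power sums over a finite additive subgroup\<close>

definition fin_add_subgroup :: "'a::ab_group_add set \<Rightarrow> bool" where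
  "fin_add_subgroup W \<longleftrightarrow> finite W \<and> 0 \<in> W \<and> (\<forall>w\<in>W. \<forall>w'\<in>W. w' - w \<in> W)"

definition inv_power_sum :: "'f::field set \<Rightarrow> nat \<Rightarrow> 'f fls" where
  "inv_power_sum W i = (\<Sum>w\<in>W. inverse (fls_X + fls_const w) ^ i)"

definition recip_power_sum :: "'f::field set \<Rightarrow> nat \<Rightarrow> 'f" where
  "recip_power_sum W m = (\<Sum>w\<in>W-{0}. inverse w ^ m)"

lemma fls_X_plus_const_ne_0: "fls_X + fls_const w \<noteq> (0::'f::field fls)"
proof
  assume "fls_X + fls_const w = (0::'f fls)"
  then have "(fls_X + fls_const w) $$ 1 = (0::'f fls) $$ 1" by simp
  then show False by simp
qed

lemma inverse_fls_X_plus_const_power_nth_neg: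
  assumes "w \<noteq> 0" "n < 0"
  shows "(inverse (fls_X + fls_const w) ^ i) $$ n = (0::'f::field)"
proof -
  have "fls_subdegree (fls_X + fls_const w :: 'f fls) = 0"
    by (rule fls_subdegree_eqI) (use assms in auto)
  then have "fls_subdegree (inverse (fls_X + fls_const w :: 'f fls) ^ i) = 0"
    by (simp add: fls_subdegree_pow)
  then show ?thesis using assms(2) by simp
qed

lemma inv_power_sum_nth_neg:
  assumes "finite W" "0 \<in> W" "1 \<le> m"
  shows "inv_power_sum W i $$ (- int m) = (if m = i then 1 else 0)"
proof -
  have "inv_power_sum W i $$ (- int m) = (\<Sum>w\<in>W. (inverse (fls_X + fls_const w) ^ i) $$ (- int m))"
    by (simp add: inv_power_sum_def fls_nth_sum)
  also have "\<dots> = (inverse (fls_X + fls_const 0) ^ i) $$ (- int m)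
      + (\<Sum>w\<in>W-{0}. (inverse (fls_X + fls_const w) ^ i) $$ (- int m))"
    using assms by (simp add: sum.remove)
  also have "(\<Sum>w\<in>W-{0}. (inverse (fls_X + fls_const w) ^ i) $$ (- int m)) = 0"
    using assms by (intro sum.neutral) (auto intro!: inverse_fls_X_plus_const_power_nth_neg)
  finally show ?thesis by (simp add: fls_inverse_X)
qed

lemma sum_shift_subgroup:
  fixes W :: "'f::field set"
  assumes "fin_add_subgroup W" "w \<in> W"
  shows "(\<Sum>w'\<in>W-{w}. f (w' - w)) = (\<Sum>d\<in>W-{0}. f d)"
proof -
  have closed: "w' - w \<in> W" "w' + w \<in> W" if "w' \<in> W" for w'
  proof -
    have "- w \<in> W" using assms unfolding fin_add_subgroup_def by (metis diff_0)
    then show "w' - w \<in> W" "w' + w \<in> W"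
      using assms that unfolding fin_add_subgroup_def by (metis diff_minus_eq_add)+
  qed
  show ?thesis
    by (rule sum.reindex_bij_witness[of _ "\<lambda>d. d + w" "\<lambda>w'. w' - w"]) (auto simp: closed)
qed

lemma fls_const_sum: "fls_const (\<Sum>a\<in>A. f a) = (\<Sum>a\<in>A. fls_const (f a))"
  by (induct A rule: infinite_finite_induct) (auto simp: fls_plus_const[symmetric])

lemma fls_const_inject: "fls_const a = fls_const b \<longleftrightarrow> a = (b::'a::zero)"
  by (metis fls_const_nth)

lemma fls_inverse_const_power: "inverse (fls_const (c::'f::field)) ^ m = fls_const (inverse c ^ m)"
  by (simp add: fls_inverse_const fls_const_power)

lemma sum_offdiag_swap:
  fixes F :: "'a \<Rightarrow> 'a \<Rightarrow> 'b::ab_group_add"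
  assumes "finite W"
  shows "(\<Sum>w\<in>W. \<Sum>w'\<in>W-{w}. F w w') = (\<Sum>w'\<in>W. \<Sum>w\<in>W-{w'}. F w w')"
proof -
  have "(\<Sum>w\<in>W. \<Sum>w'\<in>W-{w}. F w w') = (\<Sum>w\<in>W. \<Sum>w'\<in>W. F w w') - (\<Sum>w\<in>W. F w w)"
    using assms by (simp add: sum_diff1 sum_subtractf)
  also have "\<dots> = (\<Sum>w'\<in>W. \<Sum>w\<in>W. F w w') - (\<Sum>w\<in>W. F w w)" by (subst sum.swap) simp
  also have "\<dots> = (\<Sum>w'\<in>W. \<Sum>w\<in>W-{w'}. F w w')"
    using assms by (simp add: sum_diff1 sum_subtractf)
  finally show ?thesis .
qed

definition chen_sum :: "'f::field set \<Rightarrow> nat \<Rightarrow> nat \<Rightarrow> 'f fls" where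
  "chen_sum W a b = (\<Sum>i<a. of_nat ((b - 1 + i) choose i) * (-1) ^ i
      * fls_const (recip_power_sum W (b + i)) * inv_power_sum W (a - i))"

lemma sum_offdiag_pf_part:
  fixes W :: "'f::field set"
  assumes W: "fin_add_subgroup W"
  shows "(\<Sum>w\<in>W. \<Sum>w'\<in>W-{w}. pf_part a b (fls_X + fls_const w) (fls_X + fls_const w')) = chen_sum W a b"
proof -
  define U where "U w = inverse (fls_X + fls_const w :: 'f fls)" for w
  define C where "C i = (of_nat ((b - 1 + i) choose i) :: 'f fls) * (-1) ^ i" for i
  have "pf_part a b (fls_X + fls_const w) (fls_X + fls_const w') =
      (\<Sum>i<a. C i * U w ^ (a - i) * fls_const (inverse (w' - w) ^ (b + i)))" for w w'
    by (simp add: pf_part_def U_def C_def fls_minus_const fls_inverse_const_power algebra_simps)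
  then have "(\<Sum>w\<in>W. \<Sum>w'\<in>W-{w}. pf_part a b (fls_X + fls_const w) (fls_X + fls_const w'))
      = (\<Sum>i<a. \<Sum>w\<in>W. C i * U w ^ (a - i) * (\<Sum>w'\<in>W-{w}. fls_const (inverse (w' - w) ^ (b + i))))"
    by (simp add: sum_distrib_left sum.swap[of _ "{..<a}"])
  also have "\<dots> = (\<Sum>i<a. \<Sum>w\<in>W. C i * U w ^ (a - i) * fls_const (recip_power_sum W (b + i)))"
    using sum_shift_subgroup[OF W, of _ "\<lambda>d. inverse d ^ _"]
    by (intro sum.cong refl) (simp add: recip_power_sum_def flip: fls_const_sum)
  also have "\<dots> = chen_sum W a b"
    by (simp add: chen_sum_def inv_power_sum_def U_def C_def sum_distrib_left sum_distrib_right algebra_simps)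
  finally show ?thesis .
qed

lemma inv_power_sum_mult_chen_sum:
  fixes W :: "'f::field set"
  assumes W: "fin_add_subgroup W" and a: "1 \<le> a" and b: "1 \<le> b"
  shows "inv_power_sum W a * inv_power_sum W b = inv_power_sum W (a + b) + chen_sum W a b + chen_sum W b a"
proof -
  define U where "U w = (fls_X + fls_const w :: 'f fls)" for w
  have fin: "finite W" using W by (simp add: fin_add_subgroup_def)
  have "inv_power_sum W a * inv_power_sum W b = (\<Sum>w\<in>W. \<Sum>w'\<in>W. inverse (U w) ^ a * inverse (U w') ^ b)"
    by (simp add: inv_power_sum_def U_def sum_product)
  also have "\<dots> = (\<Sum>w\<in>W. inverse (U w) ^ (a + b) + (\<Sum>w'\<in>W-{w}. inverse (U w) ^ a * inverse (U w') ^ b))"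
    using fin by (intro sum.cong refl) (simp add: sum.remove power_add)
  also have "\<dots> = inv_power_sum W (a + b) + (\<Sum>w\<in>W. \<Sum>w'\<in>W-{w}. inverse (U w) ^ a * inverse (U w') ^ b)"
    by (simp add: sum.distrib inv_power_sum_def U_def)
  also have "(\<Sum>w\<in>W. \<Sum>w'\<in>W-{w}. inverse (U w) ^ a * inverse (U w') ^ b)
      = (\<Sum>w\<in>W. \<Sum>w'\<in>W-{w}. pf_part a b (U w) (U w')) + (\<Sum>w\<in>W. \<Sum>w'\<in>W-{w}. pf_part b a (U w') (U w))"
    unfolding sum.distrib[symmetric]
  proof (intro sum.cong refl)
    fix w w' assume "w' \<in> W - {w}"
    then have "U w \<noteq> U w'" by (auto simp: U_def fls_const_inject)
    then show "inverse (U w) ^ a * inverse (U w') ^ b = pf_part a b (U w) (U w') + pf_part b a (U w') (U w)"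
      using inverse_powers_partial_fraction[OF _ _ _ a b] unfolding U_def
      by (metis fls_X_plus_const_ne_0)
  qed
  also have "(\<Sum>w\<in>W. \<Sum>w'\<in>W-{w}. pf_part b a (U w') (U w)) = (\<Sum>w'\<in>W. \<Sum>w\<in>W-{w'}. pf_part b a (U w') (U w))"
    by (rule sum_offdiag_swap[OF fin])
  finally show ?thesis using sum_offdiag_pf_part[OF W] by (simp add: U_def add.assoc)
qed

definition delta_term :: "nat \<Rightarrow> nat \<Rightarrow> nat \<Rightarrow> 'f::field" where
  "delta_term Q b j = (if Q dvd j then (-1) ^ (b - 1) * of_nat ((j - 1) choose (b - 1)) else 0)"

lemma fls_minus_one_power: "(-1::'f::field fls) ^ i = fls_const ((-1) ^ i)"
  by (simp add: fls_const_power)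

lemma minus_one_power_pred:
  assumes "(-1::'f::comm_ring_1) ^ (b + i) = 1" "1 \<le> b"
  shows "(-1::'f) ^ (b - 1) = - ((-1) ^ i)"
proof -
  obtain b' where b': "b = Suc b'" using assms(2) by (cases b) auto
  define x :: 'f where "x = (-1) ^ b'"
  define y :: 'f where "y = (-1) ^ i"
  have xy: "- (x * y) = 1" using assms(1) by (simp add: b' x_def y_def power_add)
  have "x = x * (y * y)" by (simp add: y_def flip: power_add)
  also have "\<dots> = (x * y) * y" by (simp add: mult.assoc)
  also have "\<dots> = - y" using xy by (metis minus_equation_iff mult_minus1)
  finally show ?thesis by (simp add: b' x_def y_def)
qed

lemma chen_sum_eq_delta_term_sum:
  fixes W :: "'f::field set" and \<zeta> :: "nat \<Rightarrow> 'f"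
  assumes b: "1 \<le> b"
    and recip: "\<And>m. 1 \<le> m \<Longrightarrow> recip_power_sum W m = (if Q dvd m then - \<zeta> m else 0)"
    and sign: "\<And>m. Q dvd m \<Longrightarrow> (-1::'f) ^ m = 1"
  shows "chen_sum W a b = (\<Sum>j\<in>{1..<a+b}. fls_const (delta_term Q b j * \<zeta> j) * inv_power_sum W (a + b - j))"
proof -
  have "(\<Sum>j\<in>{1..<a+b}. fls_const (delta_term Q b j * \<zeta> j) * inv_power_sum W (a + b - j)) =
        (\<Sum>j\<in>{b..<a+b}. fls_const (delta_term Q b j * \<zeta> j) * inv_power_sum W (a + b - j))"
    using b by (intro sum.mono_neutral_right) (auto simp: delta_term_def binomial_eq_0)
  also have "\<dots> = (\<Sum>i<a. fls_const (delta_term Q b (b + i) * \<zeta> (b + i)) * inv_power_sum W (a - i))"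
    using sum.shift_bounds_nat_ivl[of "\<lambda>j. fls_const (delta_term Q b j * \<zeta> j) * inv_power_sum W (a + b - j)" 0 b a]
    by (simp add: atLeast0LessThan add.commute)
  also have "\<dots> = chen_sum W a b"
    unfolding chen_sum_def
  proof (intro sum.cong refl)
    fix i
    have key: "of_nat ((b - 1 + i) choose i) * (-1) ^ i * recip_power_sum W (b + i) = delta_term Q b (b + i) * \<zeta> (b + i)"
    proof (cases "Q dvd (b + i)")
      case True
      have "(b + i - 1) choose (b - 1) = (b - 1 + i) choose i"
        using b by (metis add.commute binomial_symmetric le_add2 add_diff_cancel_left' Nat.add_diff_assoc2)
      then show ?thesis
        using True b minus_one_power_pred[OF sign[OF True] b] by (simp add: delta_term_def recip)
    qed (use b in \<open>simp add: delta_term_def recip\<close>)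
    then show "fls_const (delta_term Q b (b + i) * \<zeta> (b + i)) * inv_power_sum W (a - i) =
        of_nat ((b - 1 + i) choose i) * (-1) ^ i * fls_const (recip_power_sum W (b + i)) * inv_power_sum W (a - i)"
      by (simp add: key[symmetric] fls_of_nat fls_minus_one_power)
  qed
  finally show ?thesis by simp
qed

lemma inv_power_sum_mult:
  fixes W :: "'f::field set" and \<zeta> :: "nat \<Rightarrow> 'f"
  assumes W: "fin_add_subgroup W" and a: "1 \<le> a" and b: "1 \<le> b"
    and recip: "\<And>m. 1 \<le> m \<Longrightarrow> recip_power_sum W m = (if Q dvd m then - \<zeta> m else 0)"
    and sign: "\<And>m. Q dvd m \<Longrightarrow> (-1::'f) ^ m = 1"
  shows "inv_power_sum W a * inv_power_sum W b = inv_power_sum W (a + b)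
    + (\<Sum>j\<in>{1..<a+b}. fls_const ((delta_term Q a j + delta_term Q b j) * \<zeta> j) * inv_power_sum W (a + b - j))"
proof -
  have "(\<Sum>j\<in>{1..<a+b}. fls_const ((delta_term Q a j + delta_term Q b j) * \<zeta> j) * inv_power_sum W (a + b - j))
    = (\<Sum>j\<in>{1..<a+b}. fls_const (delta_term Q b j * \<zeta> j) * inv_power_sum W (a + b - j))
      + (\<Sum>j\<in>{1..<b+a}. fls_const (delta_term Q a j * \<zeta> j) * inv_power_sum W (b + a - j))"
    by (simp add: algebra_simps sum.distrib fls_plus_const[symmetric] add.commute)
  also have "\<dots> = chen_sum W a b + chen_sum W b a"
    using chen_sum_eq_delta_term_sum[OF b recip sign, of a] chen_sum_eq_delta_term_sum[OF a recip sign, of b]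
    by simp
  finally show ?thesis using inv_power_sum_mult_chen_sum[OF W a b] by (simp add: add.assoc)
qed

section \<open>Inverse power sums of linear polynomials over a finite field\<close>

text \<open>With q = card UNIV, psum1 j is the sum of (X + v)^(-j) over v in F_q, an element of
  F_q((X)), and psum2 j the sum of (Y + u X + v)^(-j) over u, v in F_q, an element of F_q((X))((Y)).
  Both obey a product rule whose coefficients are the Delta of the diamond product.\<close>

abbreviation psum1 :: "nat \<Rightarrow> 'k::{finite,field} fls" where
  "psum1 \<equiv> inv_power_sum UNIV"

lemma fin_add_subgroup_UNIV: "fin_add_subgroup (UNIV :: 'k::{finite,ab_group_add} set)"
  by (simp add: fin_add_subgroup_def)

lemma Delta_eq_delta_term:
  "Delta a b j = (delta_term (card (UNIV :: 'k set) - 1) a j + delta_term (card (UNIV :: 'k set) - 1) b j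
     :: 'k::{finite,field})"
  by (simp add: Delta_def delta_term_def)

lemma recip_power_sum_UNIV:
  "recip_power_sum (UNIV :: 'k::{finite,field} set) m = (if (card (UNIV :: 'k set) - 1) dvd m then - 1 else 0)"
  by (simp add: recip_power_sum_def sum_nonzero_inverse_power)

lemma psum1_mult:
  assumes "1 \<le> a" "1 \<le> b"
  shows "(psum1 a :: 'k::{finite,field} fls) * psum1 b
    = psum1 (a + b) + (\<Sum>j\<in>{1..<a+b}. fls_const (Delta a b j) * psum1 (a + b - j))"
proof -
  let ?Q = "card (UNIV :: 'k set) - 1"
  have "(psum1 a :: 'k fls) * psum1 b = psum1 (a + b)
      + (\<Sum>j\<in>{1..<a+b}. fls_const ((delta_term ?Q a j + delta_term ?Q b j) * 1) * (psum1 (a + b - j) :: 'k fls))"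
    by (rule inv_power_sum_mult[OF fin_add_subgroup_UNIV assms])
      (simp_all add: recip_power_sum_UNIV minus_one_power_card_dvd)
  then show ?thesis by (simp add: Delta_eq_delta_term)
qed

definition lin_poly :: "'k \<times> 'k \<Rightarrow> 'k::{finite,field} fls" where
  "lin_poly p = fls_const (fst p) * fls_X + fls_const (snd p)"

abbreviation psum2 :: "nat \<Rightarrow> 'k::{finite,field} fls fls" where
  "psum2 \<equiv> inv_power_sum (range lin_poly)"

lemma lin_poly_inj: "inj lin_poly"
proof (rule injI)
  fix p q :: "'k::{finite,field} \<times> 'k" assume "lin_poly p = lin_poly q"
  then have "lin_poly p $$ 0 = lin_poly q $$ 0" "lin_poly p $$ 1 = lin_poly q $$ 1" by simp_all
  then show "p = q" by (simp add: lin_poly_def prod_eq_iff)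
qed

lemma lin_poly_zero: "lin_poly (0, 0) = 0"
  by (simp add: lin_poly_def)

lemma fin_add_subgroup_lin_polys: "fin_add_subgroup (range (lin_poly :: _ \<Rightarrow> 'k::{finite,field} fls))"
proof -
  have "lin_poly p' - lin_poly p = lin_poly (fst p' - fst p, snd p' - snd p)" for p p' :: "'k \<times> 'k"
    by (simp add: lin_poly_def algebra_simps fls_minus_const[symmetric])
  then show ?thesis
    unfolding fin_add_subgroup_def using rangeI[of lin_poly "(0, 0)"] by (auto simp: lin_poly_zero)
qed

lemma sum_inverse_lin_poly_power_nonconst:
  assumes "c1 \<noteq> 0"
  shows "(\<Sum>c0\<in>UNIV. inverse (lin_poly (c1, c0)) ^ m) = fls_const (inverse c1 ^ m) * (psum1 m :: 'k::{finite,field} fls)"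
proof -
  have "inverse (lin_poly (c1, c0)) ^ m = fls_const (inverse c1 ^ m) * inverse (fls_X + fls_const (c0 / c1)) ^ m"
    for c0 :: 'k
  proof -
    have "lin_poly (c1, c0) = fls_const c1 * (fls_X + fls_const (c0 / c1))"
      using assms by (simp add: lin_poly_def algebra_simps)
    then show ?thesis by (simp add: inverse_mult_distrib power_mult_distrib fls_inverse_const_power)
  qed
  then have "(\<Sum>c0\<in>UNIV. inverse (lin_poly (c1, c0)) ^ m)
      = fls_const (inverse c1 ^ m) * (\<Sum>c0\<in>UNIV. inverse (fls_X + fls_const (c0 / c1)) ^ m)"
    by (simp add: sum_distrib_left)
  also have "(\<Sum>c0\<in>UNIV. inverse (fls_X + fls_const (c0 / c1)) ^ m) = psum1 m"
    unfolding inv_power_sum_def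
    by (rule sum.reindex_bij_witness[of _ "\<lambda>c. c * c1" "\<lambda>c0. c0 / c1"]) (use assms in auto)
  finally show ?thesis .
qed

lemma recip_power_sum_lin_polys:
  fixes m :: nat
  defines "s \<equiv> recip_power_sum (UNIV :: 'k::{finite,field} set) m"
  shows "recip_power_sum (range lin_poly) m = fls_const s * (psum1 m + 1 :: 'k fls)"
proof -
  let ?N = "UNIV - {0::'k}"
  have "recip_power_sum (range lin_poly) m = (\<Sum>p\<in>UNIV - {(0::'k, 0::'k)}. inverse (lin_poly p) ^ m)"
  proof -
    have "range lin_poly - {0} = lin_poly ` (UNIV - {(0::'k, 0::'k)})"
      by (simp add: image_set_diff[OF lin_poly_inj] lin_poly_zero)
    then show ?thesis
      unfolding recip_power_sum_def by (simp only:) (subst sum.reindex, auto intro: inj_on_subset[OF lin_poly_inj])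
  qed
  also have "UNIV - {(0::'k, 0::'k)} = (?N \<times> UNIV) \<union> ({0} \<times> ?N)" by auto
  also have "(\<Sum>p\<in>(?N \<times> UNIV) \<union> ({0} \<times> ?N). inverse (lin_poly p) ^ m) =
      (\<Sum>c1\<in>?N. \<Sum>c0\<in>UNIV. inverse (lin_poly (c1, c0)) ^ m) + (\<Sum>c\<in>?N. inverse (lin_poly (0, c)) ^ m)"
  proof -
    have "(\<Sum>p\<in>{0} \<times> ?N. inverse (lin_poly p) ^ m) = (\<Sum>c\<in>?N. inverse (lin_poly (0, c)) ^ m)"
      by (rule sum.reindex_bij_witness[of _ "\<lambda>c. (0, c)" snd]) auto
    then show ?thesis by (subst sum.union_disjoint) (auto simp: sum.cartesian_product)
  qed
  also have "(\<Sum>c1\<in>?N. \<Sum>c0\<in>UNIV. inverse (lin_poly (c1, c0)) ^ m) = fls_const s * psum1 m"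
    by (simp add: sum_inverse_lin_poly_power_nonconst s_def recip_power_sum_def fls_const_sum sum_distrib_right)
  also have "(\<Sum>c\<in>?N. inverse (lin_poly (0, c)) ^ m) = fls_const s"
    by (simp add: lin_poly_def fls_inverse_const_power fls_const_sum s_def recip_power_sum_def)
  finally show ?thesis by (simp add: algebra_simps)
qed

lemma psum2_mult:
  assumes "1 \<le> a" "1 \<le> b"
  shows "(psum2 a :: 'k::{finite,field} fls fls) * psum2 b = psum2 (a + b)
    + (\<Sum>j\<in>{1..<a+b}. fls_const (fls_const (Delta a b j) * (psum1 j + 1)) * psum2 (a + b - j))"
proof -
  let ?Q = "card (UNIV :: 'k set) - 1"
  have recip: "recip_power_sum (range lin_poly) m = (if ?Q dvd m then - (psum1 m + 1) else (0 :: 'k fls))"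
    if "1 \<le> m" for m
    by (simp add: recip_power_sum_lin_polys recip_power_sum_UNIV)
  have sign: "(-1 :: 'k fls) ^ m = 1" if "?Q dvd m" for m
    using minus_one_power_card_dvd[OF that] by (simp add: fls_minus_one_power)
  have "(psum2 a :: 'k fls fls) * psum2 b = psum2 (a + b)
      + (\<Sum>j\<in>{1..<a+b}. fls_const ((delta_term ?Q a j + delta_term ?Q b j) * (psum1 j + 1)) * psum2 (a + b - j))"
    by (rule inv_power_sum_mult[OF fin_add_subgroup_lin_polys assms recip sign])
  moreover have "delta_term Q a j + delta_term Q b j = fls_const (delta_term Q a j + delta_term Q b j :: 'k)" for Q j
    by (simp add: delta_term_def fls_of_nat fls_minus_one_power fls_plus_const)
  ultimately show ?thesis by (simp add: Delta_eq_delta_term)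
qed

section \<open>Supports of shuffle products\<close>

definition pos_word :: "'k letter list \<Rightarrow> bool" where
  "pos_word w \<longleftrightarrow> (\<forall>p\<in>set w. 1 \<le> fst p)"

definition word_weight :: "'k letter list \<Rightarrow> nat" where
  "word_weight w = sum_list (map fst w)"

definition label_one :: "'k::one letter list \<Rightarrow> bool" where
  "label_one w \<longleftrightarrow> (\<forall>p\<in>set w. snd p = 1)"

lemma pos_word_simps [simp]: "pos_word []" "pos_word (p # w) \<longleftrightarrow> 1 \<le> fst p \<and> pos_word w"
  by (auto simp: pos_word_def)

lemma word_weight_simps [simp]: "word_weight [] = 0" "word_weight (p # w) = fst p + word_weight w"
  by (auto simp: word_weight_def)

lemma label_one_simps [simp]: "label_one []" "label_one (p # w) \<longleftrightarrow> snd p = 1 \<and> label_one w"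
  by (auto simp: label_one_def)

lemma word_weight_eq_0: "pos_word t \<Longrightarrow> word_weight t = 0 \<Longrightarrow> t = []"
  by (cases t) auto

lemma in_supp_add: "w \<in> supp ((A::'k::comm_ring_1 vec) + B) \<Longrightarrow> w \<in> supp A \<or> w \<in> supp B"
  using supp_add by blast

lemma in_supp_smul: "w \<in> supp (smul c (A::'k::comm_ring_1 vec)) \<Longrightarrow> w \<in> supp A"
  using supp_smul by blast

lemma in_supp_sum:
  "finite I \<Longrightarrow> w \<in> supp (\<Sum>i\<in>I. (f i::'k::comm_ring_1 vec)) \<Longrightarrow> \<exists>i\<in>I. w \<in> supp (f i)"
  using supp_sum by blast

lemma in_supp_pre: "w \<in> supp (pre l (A::'k::comm_ring_1 vec)) \<Longrightarrow> \<exists>w'. w = l # w' \<and> w' \<in> supp A"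
  by (auto simp: supp_pre)

lemma in_supp_lin_ext: "w \<in> supp (lin_ext f (A::'k::comm_ring_1 vec)) \<Longrightarrow> \<exists>u\<in>supp A. w \<in> supp (f u)"
  using supp_lin_ext by blast

lemma in_supp_basis: "w \<in> supp (basis u :: 'k::comm_ring_1 vec) \<Longrightarrow> w = u"
  by (simp add: supp_basis)

definition shuffle_shape :: "'k::one word \<Rightarrow> 'k word \<Rightarrow> 'k word \<Rightarrow> bool" where
  "shuffle_shape a b w \<longleftrightarrow> pos_word w \<and> word_weight w = word_weight a + word_weight b
     \<and> length w \<le> length a + length b \<and> (label_one a \<longrightarrow> label_one b \<longrightarrow> label_one w)"

lemma supp_lsh:
  "pos_word u \<Longrightarrow> 1 \<le> j \<Longrightarrow> w \<in> supp (lsh j u :: 'k::{finite,field} vec) \<Longrightarrow> shuffle_shape [(j, 1)] u w"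
proof (induct j u arbitrary: w rule: lsh.induct)
  case (1 j)
  then show ?case by (auto simp: shuffle_shape_def dest!: in_supp_basis)
next
  case (2 j b \<beta> u)
  from "2.prems"(3) consider
      "w \<in> supp (pre (j, 1) (basis ((b, \<beta>) # u)) :: 'k vec)"
    | "w \<in> supp (pre (b, \<beta>) (lsh j u))"
    | "w \<in> supp (pre (j + b, \<beta>) (basis u) :: 'k vec)"
    | k where "k \<in> {1..<j + b}" "w \<in> supp (pre (j + b - k, \<beta>) (lsh k u))"
    by (auto dest!: in_supp_add in_supp_sum[OF finite_atLeastLessThan] in_supp_smul)
  then show ?case
  proof cases
    case 2
    then obtain w' where "w = (b, \<beta>) # w'" "w' \<in> supp (lsh j u)" by (auto dest!: in_supp_pre)
    then show ?thesis using "2.hyps"(1)[of w'] "2.prems" by (auto simp: shuffle_shape_def)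
  next
    case (4 k)
    then obtain w' where "w = (j + b - k, \<beta>) # w'" "w' \<in> supp (lsh k u)" by (auto dest!: in_supp_pre)
    then show ?thesis using "2.hyps"(2)[of k w'] "2.prems" 4(1) by (auto simp: shuffle_shape_def)
  qed (use "2.prems" in \<open>auto simp: shuffle_shape_def dest!: in_supp_pre in_supp_basis\<close>)
qed

lemma supp_dm_step:
  fixes S :: "'k::{finite,field} vec"
  assumes "w \<in> supp (dm_step x y S)"
  obtains (head) u where "w = (fst x + fst y, snd x * snd y) # u" "u \<in> supp S"
  | (tail) k u w' where "1 \<le> k" "k < fst x + fst y" "w = (fst x + fst y - k, snd x * snd y) # w'"
      "u \<in> supp S" "w' \<in> supp (lsh k u)"
proof -
  obtain a \<alpha> b \<beta> where xy: "x = (a, \<alpha>)" "y = (b, \<beta>)" by (cases x, cases y)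
  from assms consider "w \<in> supp (pre (a + b, \<alpha> * \<beta>) S)"
    | k where "k \<in> {1..<a + b}" "w \<in> supp (pre (a + b - k, \<alpha> * \<beta>) (lin_ext (lsh k) S))"
    by (auto simp: xy dm_step_def dest!: in_supp_add in_supp_sum[OF finite_atLeastLessThan] in_supp_smul)
  then show ?thesis
  proof cases
    case 1
    then show ?thesis using head by (auto simp: xy dest!: in_supp_pre)
  next
    case (2 k)
    then show ?thesis using tail[of k] by (auto simp: xy dest!: in_supp_pre in_supp_lin_ext)
  qed
qed

lemma supp_sh_w:
  "pos_word a \<Longrightarrow> pos_word b \<Longrightarrow> w \<in> supp (sh_w a b :: 'k::{finite,field} vec) \<Longrightarrow> shuffle_shape a b w"
proof (induct a b arbitrary: w rule: sh_w.induct)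
  case (3 x a y b)
  from "3.prems"(3) consider "w \<in> supp (pre x (sh_w a (y # b)))" | "w \<in> supp (pre y (sh_w (x # a) b))"
    | "w \<in> supp (dm_step x y (sh_w a b))"
    by (auto dest!: in_supp_add)
  then show ?case
  proof cases
    case 1
    then show ?thesis using "3.hyps"(1) "3.prems" by (auto simp: shuffle_shape_def dest!: in_supp_pre)
  next
    case 2
    then show ?thesis using "3.hyps"(2) "3.prems" by (auto simp: shuffle_shape_def dest!: in_supp_pre)
  next
    case 3
    then show ?thesis
    proof (cases rule: supp_dm_step)
      case (head u)
      then show ?thesis using "3.hyps"(3)[of u] "3.prems" by (auto simp: shuffle_shape_def)
    next
      case (tail k u w')
      have u: "shuffle_shape a b u" using "3.hyps"(3) "3.prems" tail(4) by simp
      then have "shuffle_shape [(k, 1)] u w'" using supp_lsh tail by (auto simp: shuffle_shape_def)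
      then show ?thesis using u tail "3.prems" by (auto simp: shuffle_shape_def)
    qed
  qed
qed (auto simp: shuffle_shape_def dest!: in_supp_basis)

section \<open>The letter identity\<close>

definition lin_fun ::
  "('k \<Rightarrow> 'R) \<Rightarrow> ('k word \<Rightarrow> 'R) \<Rightarrow> 'k::comm_ring_1 vec \<Rightarrow> 'R::comm_ring_1" where
  "lin_fun h \<phi> V = (\<Sum>w\<in>supp V. h (V w) * \<phi> w)"

locale scalar_hom = fixes h :: "'k::comm_ring_1 \<Rightarrow> 'R::comm_ring_1"
  assumes h_add: "h (x + y) = h x + h y" and h_mult: "h (x * y) = h x * h y" and h_0: "h 0 = 0" and h_1: "h 1 = 1"
begin

lemma lin_fun_eq_sum: "finite A \<Longrightarrow> supp V \<subseteq> A \<Longrightarrow> lin_fun h \<phi> V = (\<Sum>w\<in>A. h (V w) * \<phi> w)"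
  unfolding lin_fun_def by (rule sum.mono_neutral_left) (auto simp: supp_def h_0)

lemma lin_fun_add:
  assumes "finsupp U" "finsupp V"
  shows "lin_fun h \<phi> (U + V) = lin_fun h \<phi> U + lin_fun h \<phi> V"
proof -
  have fin: "finite (supp U \<union> supp V)" using assms by (simp add: finsupp_def)
  have "supp (U + V) \<subseteq> supp U \<union> supp V" by (rule supp_add)
  then show ?thesis by (simp add: lin_fun_eq_sum[OF fin] h_add algebra_simps sum.distrib)
qed

lemma lin_fun_smul:
  assumes "finsupp V"
  shows "lin_fun h \<phi> (smul c V) = h c * lin_fun h \<phi> V"
proof -
  have fin: "finite (supp V)" using assms by (simp add: finsupp_def)
  have "supp (smul c V) \<subseteq> supp V" by (rule supp_smul)
  then show ?thesis by (simp add: lin_fun_eq_sum[OF fin] smul_def h_mult sum_distrib_left algebra_simps)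
qed

lemma lin_fun_zero: "lin_fun h \<phi> 0 = 0" by (simp add: lin_fun_def)

lemma lin_fun_sum:
  "finite I \<Longrightarrow> (\<And>i. i \<in> I \<Longrightarrow> finsupp (f i)) \<Longrightarrow>
    lin_fun h \<phi> (\<Sum>i\<in>I. f i) = (\<Sum>i\<in>I. lin_fun h \<phi> (f i))"
  by (induct I rule: finite_induct) (auto simp: lin_fun_zero lin_fun_add)

lemma lin_fun_basis: "lin_fun h \<phi> (basis w) = \<phi> w"
  unfolding lin_fun_def supp_basis by (simp add: basis_def h_1)

lemma lin_fun_pre: "lin_fun h \<phi> (pre l V) = lin_fun h (\<lambda>t. \<phi> (l # t)) V"
  unfolding lin_fun_def supp_pre by (subst sum.reindex) (auto simp: inj_on_def pre_def)

lemma lin_fun_mult_left: "lin_fun h (\<lambda>t. K * \<phi> t) V = K * lin_fun h \<phi> V"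
  unfolding lin_fun_def by (simp add: sum_distrib_left algebra_simps)

end

interpretation fls_const_hom: scalar_hom "fls_const :: 'k::comm_ring_1 \<Rightarrow> 'k fls"
  by unfold_locales (simp_all add: fls_plus_const)

interpretation fls_const2_hom: scalar_hom "\<lambda>c. fls_const (fls_const c) :: 'k::comm_ring_1 fls fls"
  by unfold_locales (simp_all add: fls_plus_const)

lemma lin_fun_fls_const2:
  "lin_fun (\<lambda>c. fls_const (fls_const c)) (\<lambda>t. fls_const (\<psi> t)) V = fls_const (lin_fun fls_const \<psi> V)"
  by (simp add: lin_fun_def fls_const_sum)

text \<open>tail_val is chosen so that the shuffle of x_k with r = [] or
  r = [(j, 1)] evaluates to (psum1 k + 1) times the value of r; for r = [(j, 1)] this is the
  product rule for psum1.\<close>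

fun tail_val :: "'k word \<Rightarrow> 'k::{finite,field} fls" where
  "tail_val [] = 1"
| "tail_val [p] = psum1 (fst p) + 1"
| "tail_val [p, q] = psum1 (fst p)"
| "tail_val _ = 0"

definition tail_val_at :: "nat \<Rightarrow> 'k word \<Rightarrow> 'k::{finite,field} fls" where
  "tail_val_at n t = (if label_one t \<and> pos_word t \<and> length t \<le> 2 \<and> word_weight t = n then tail_val t else 0)"

definition tail_eval :: "nat \<Rightarrow> 'k::{finite,field} vec \<Rightarrow> 'k fls" where
  "tail_eval n = lin_fun fls_const (tail_val_at n)"

text \<open>A word (i, e) # t of weight s is evaluated to psum2 i times the value of its tail in
  F_q((X))((Y)). Both sides of the letter identity evaluate to psum2 a * psum2 b * psum2 c, and
  the evaluation is injective on the words occurring in them.\<close>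

definition word_val :: "nat \<Rightarrow> 'k \<Rightarrow> 'k word \<Rightarrow> 'k::{finite,field} fls fls" where
  "word_val s e w = (case w of [] \<Rightarrow> 0 | p # t \<Rightarrow>
     if snd p = e \<and> 1 \<le> fst p \<and> fst p \<le> s
     then psum2 (fst p) * fls_const (tail_val_at (s - fst p) t) else 0)"

definition word_eval :: "nat \<Rightarrow> 'k \<Rightarrow> 'k::{finite,field} vec \<Rightarrow> 'k fls fls" where
  "word_eval s e = lin_fun (\<lambda>c. fls_const (fls_const c)) (word_val s e)"

lemma word_eval_pre:
  "1 \<le> i \<Longrightarrow> i \<le> s \<Longrightarrow> word_eval s e (pre (i, e) V) = psum2 i * fls_const (tail_eval (s - i) V)"
  by (simp add: word_eval_def tail_eval_def word_val_def fls_const2_hom.lin_fun_pre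
      fls_const2_hom.lin_fun_mult_left lin_fun_fls_const2)

lemma tail_eval_basis: "tail_eval n (basis t) = tail_val_at n t"
  by (simp add: tail_eval_def fls_const_hom.lin_fun_basis)

lemma tail_eval_sh_w_letters:
  assumes k: "1 \<le> k" and j: "1 \<le> j"
  shows "tail_eval n (sh_w [(k, 1)] [(j, 1)] :: 'k::{finite,field} vec) = (if n = k + j then (psum1 k + 1) * (psum1 j + 1) else 0)"
proof -
  have e: "sh_w [(k, 1)] [(j, 1)] = basis [(k,1),(j,1)] + basis [(j,1),(k,1)] + (basis [(k+j,1)]
      + (\<Sum>m\<in>{1..<k+j}. smul (Delta k j m) (basis [(k+j-m,1),(m,1)])) :: 'k vec)"
    by (simp add: dm_step_def)
  have "tail_eval n (sh_w [(k, 1)] [(j, 1)] :: 'k vec) = tail_val_at n [(k,1),(j,1)] + tail_val_at n [(j,1),(k,1)] + (tail_val_at n [(k+j,1)]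
      + (\<Sum>m\<in>{1..<k+j}. fls_const (Delta k j m) * tail_val_at n [(k+j-m,1),(m,1)]))"
    unfolding e tail_eval_def
    by (simp add: fls_const_hom.lin_fun_add fls_const_hom.lin_fun_sum fls_const_hom.lin_fun_smul fls_const_hom.lin_fun_basis)
  also have "\<dots> = (if n = k + j then psum1 k + psum1 j + (psum1 (k + j) + 1 + (\<Sum>m\<in>{1..<k+j}. fls_const (Delta k j m) * psum1 (k + j - m))) else 0)"
    using k j by (auto simp: tail_val_at_def intro!: sum.neutral sum.cong)
  also have "\<dots> = (if n = k + j then (psum1 k + 1) * (psum1 j + 1) else 0)"
  proof -
    have "(psum1 k + 1) * (psum1 j + 1) = psum1 k * psum1 j + psum1 k + psum1 j + (1::'k fls)"
      by (simp add: distrib_left distrib_right)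
    also have "\<dots> = psum1 k + psum1 j + (psum1 (k + j) + 1 + (\<Sum>m\<in>{1..<k+j}. fls_const (Delta k j m) * psum1 (k + j - m)))"
      by (subst psum1_mult[OF k j]) (simp add: algebra_simps)
    finally show ?thesis by simp
  qed
  finally show ?thesis .
qed

lemma tail_eval_sh_w_dm_tail:
  assumes t: "dm_tail t" and r: "dm_tail r"
  shows "tail_eval (word_weight t + word_weight r) (sh_w t r :: 'k::{finite,field} vec) = tail_val t * tail_val r"
proof -
  consider "t = []" | k where "1 \<le> k" "t = [(k, 1)]" using t unfolding dm_tail_def by blast
  then show ?thesis
  proof cases
    case 1
    then show ?thesis using r unfolding dm_tail_def by (auto simp: tail_eval_basis tail_val_at_def)
  next
    case (2 k)
    consider "r = []" | j where "1 \<le> j" "r = [(j, 1)]" using r unfolding dm_tail_def by blast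
    then show ?thesis
    proof cases
      case 1
      then show ?thesis using 2 by (simp add: tail_eval_basis tail_val_at_def)
    next
      case (2 j)
      then show ?thesis using \<open>t = [(k, 1)]\<close> tail_eval_sh_w_letters[OF \<open>1 \<le> k\<close> \<open>1 \<le> j\<close>, of "k + j"] by simp
    qed
  qed
qed

lemma word_eval_pre_sh_w:
  assumes "1 \<le> i" "dm_tail t" "dm_tail r" "i + word_weight t + word_weight r = s"
  shows "word_eval s e (pre (i, e) (sh_w t r :: 'k::{finite,field} vec))
    = psum2 i * fls_const (tail_val r) * fls_const (tail_val t)"
proof -
  have "s - i = word_weight t + word_weight r" using assms(4) by simp
  then show ?thesis using assms word_eval_pre[of i s e "sh_w t r"] tail_eval_sh_w_dm_tail[OF assms(2,3)]
    by (simp add: mult_ac)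
qed

lemma word_eval_dm_split:
  fixes \<alpha> \<beta> :: "'k::{finite,field}"
  assumes a: "1 \<le> a" and b: "1 \<le> b" and fin: "\<And>l t. finsupp (H l t)"
    and H: "\<And>i t. 1 \<le> i \<Longrightarrow> dm_tail t \<Longrightarrow> i + word_weight t = a + b \<Longrightarrow>
      word_eval s e (H (i, \<alpha> * \<beta>) t) = psum2 i * K * fls_const (tail_val t)"
  shows "word_eval s e (dm_split (a, \<alpha>) (b, \<beta>) H) = psum2 a * psum2 b * K"
proof -
  have "word_eval s e (dm_split (a, \<alpha>) (b, \<beta>) H) = word_eval s e (H (a + b, \<alpha> * \<beta>) [])
      + (\<Sum>k\<in>{1..<a+b}. fls_const (fls_const (Delta a b k)) * word_eval s e (H (a + b - k, \<alpha> * \<beta>) [(k, 1)]))"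
    using fin by (simp add: dm_split_def word_eval_def fls_const2_hom.lin_fun_add fls_const2_hom.lin_fun_sum
        fls_const2_hom.lin_fun_smul)
  also have "\<dots> = (psum2 (a + b)
      + (\<Sum>k\<in>{1..<a+b}. fls_const (fls_const (Delta a b k) * (psum1 k + 1)) * psum2 (a + b - k))) * K"
  proof -
    have terms: "fls_const (fls_const (Delta a b k)) * word_eval s e (H (a + b - k, \<alpha> * \<beta>) [(k, 1)])
        = fls_const (fls_const (Delta a b k) * (psum1 k + 1)) * psum2 (a + b - k) * K" if "k \<in> {1..<a+b}" for k
    proof -
      have "1 \<le> a + b - k" "a + b - k + word_weight [(k, 1)] = a + b" using that by auto
      then show ?thesis using that H[of "a + b - k" "[(k, 1)]"] by (simp add: mult_ac flip: fls_const_mult_const)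
    qed
    have "(\<Sum>k\<in>{1..<a+b}. fls_const (fls_const (Delta a b k)) * word_eval s e (H (a + b - k, \<alpha> * \<beta>) [(k, 1)]))
        = (\<Sum>k\<in>{1..<a+b}. fls_const (fls_const (Delta a b k) * (psum1 k + 1)) * psum2 (a + b - k) * K)"
      by (rule sum.cong[OF refl terms])
    then show ?thesis
      using a H[of "a + b" "[]"] by (simp add: distrib_right sum_distrib_right)
  qed
  also have "\<dots> = psum2 a * psum2 b * K" by (simp add: psum2_mult[OF a b])
  finally show ?thesis .
qed

text \<open>These are (x \<diamond> y) \<diamond> z and x \<diamond> (y \<diamond> z) for one-letter words x, y, z.\<close>

definition letter_assoc_lhs :: "'k letter \<Rightarrow> 'k letter \<Rightarrow> 'k letter \<Rightarrow> 'k::{finite,field} vec" where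
  "letter_assoc_lhs x y z = dm_split x y (\<lambda>l r. dm_split l z (\<lambda>m t. pre m (sh_w t r)))"

definition letter_assoc_rhs :: "'k letter \<Rightarrow> 'k letter \<Rightarrow> 'k letter \<Rightarrow> 'k::{finite,field} vec" where
  "letter_assoc_rhs x y z = dm_split y z (\<lambda>l t. dm_split x l (\<lambda>m t'. pre m (sh_w t' t)))"

lemma word_eval_letter_assoc_lhs:
  fixes \<alpha> \<beta> \<gamma> :: "'k::{finite,field}"
  assumes a: "1 \<le> a" and b: "1 \<le> b" and c: "1 \<le> c"
  shows "word_eval (a + b + c) (\<alpha> * \<beta> * \<gamma>) (letter_assoc_lhs (a, \<alpha>) (b, \<beta>) (c, \<gamma>))
    = psum2 a * psum2 b * psum2 c"
  unfolding letter_assoc_lhs_def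
proof (rule word_eval_dm_split[OF a b])
  fix i and r :: "'k word" assume "1 \<le> i" "dm_tail r" "i + word_weight r = a + b"
  then show "word_eval (a + b + c) (\<alpha> * \<beta> * \<gamma>) (dm_split (i, \<alpha> * \<beta>) (c, \<gamma>) (\<lambda>m t. pre m (sh_w t r)))
      = psum2 i * psum2 c * fls_const (tail_val r)"
    using c by (intro word_eval_dm_split word_eval_pre_sh_w) auto
qed auto

lemma word_eval_letter_assoc_rhs:
  fixes \<alpha> \<beta> \<gamma> :: "'k::{finite,field}"
  assumes a: "1 \<le> a" and b: "1 \<le> b" and c: "1 \<le> c"
  shows "word_eval (a + b + c) (\<alpha> * \<beta> * \<gamma>) (letter_assoc_rhs (a, \<alpha>) (b, \<beta>) (c, \<gamma>))
    = psum2 a * psum2 b * psum2 c"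
proof -
  have "word_eval (a + b + c) (\<alpha> * (\<beta> * \<gamma>)) (letter_assoc_rhs (a, \<alpha>) (b, \<beta>) (c, \<gamma>))
      = psum2 b * psum2 c * psum2 a"
    unfolding letter_assoc_rhs_def
  proof (rule word_eval_dm_split[OF b c])
    fix i and t :: "'k word" assume "1 \<le> i" "dm_tail t" "i + word_weight t = b + c"
    then have "word_eval (a + b + c) (\<alpha> * (\<beta> * \<gamma>)) (dm_split (a, \<alpha>) (i, \<beta> * \<gamma>) (\<lambda>m t'. pre m (sh_w t' t)))
        = psum2 a * psum2 i * fls_const (tail_val t)"
      using a by (intro word_eval_dm_split word_eval_pre_sh_w) auto
    then show "word_eval (a + b + c) (\<alpha> * (\<beta> * \<gamma>)) (dm_split (a, \<alpha>) (i, \<beta> * \<gamma>) (\<lambda>m t'. pre m (sh_w t' t)))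
        = psum2 i * psum2 a * fls_const (tail_val t)"
      by (simp add: mult_ac)
  qed auto
  then show ?thesis by (simp add: mult_ac)
qed

definition short_word :: "nat \<Rightarrow> 'k \<Rightarrow> 'k::{finite,field} word \<Rightarrow> bool" where
  "short_word s e w \<longleftrightarrow> (\<exists>i t. w = (i, e) # t \<and> 1 \<le> i \<and> i \<le> s
     \<and> label_one t \<and> pos_word t \<and> length t \<le> 2 \<and> i + word_weight t = s)"

lemma in_supp_dm_split:
  assumes "w \<in> supp (dm_split (a, \<alpha>) (b, \<beta>) H)"
  shows "w \<in> supp (H (a + b, \<alpha> * \<beta>) []) \<or> (\<exists>k\<in>{1..<a+b}. w \<in> supp (H (a + b - k, \<alpha> * \<beta>) [(k, 1)]))"
  using assms unfolding dm_split_def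
  by (auto dest!: in_supp_add in_supp_sum[OF finite_atLeastLessThan] in_supp_smul)

lemma dm_tail_props: "dm_tail r \<Longrightarrow> label_one r \<and> pos_word r \<and> length r \<le> 1"
  by (auto simp: dm_tail_def)

lemma short_word_dm_split:
  fixes lam gam e :: "'k::{finite,field}"
  assumes i: "1 \<le> i" and c: "1 \<le> c" and e: "lam * gam = e" and r: "dm_tail r" and s: "i + c + word_weight r = s"
    and w: "w \<in> supp (dm_split (i, lam) (c, gam) (\<lambda>m t. pre m (sh_w t r)))"
  shows "short_word s e w"
proof -
  have rp: "label_one r" "pos_word r" "length r \<le> 1" using dm_tail_props[OF r] by auto
  from in_supp_dm_split[OF w] show ?thesis
  proof
    assume "w \<in> supp (pre (i + c, lam * gam) (sh_w [] r))"
    then have "w = (i + c, e) # r" using e by (auto dest!: in_supp_pre in_supp_basis)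
    then show ?thesis using rp s i unfolding short_word_def by auto
  next
    assume "\<exists>k\<in>{1..<i+c}. w \<in> supp (pre (i + c - k, lam * gam) (sh_w [(k, 1)] r))"
    then obtain k w' where k: "k \<in> {1..<i+c}" and w': "w = (i + c - k, e) # w'" "w' \<in> supp (sh_w [(k, 1)] r :: 'k vec)"
      using e by (auto dest!: in_supp_pre)
    have "shuffle_shape [(k, 1)] r w'" by (rule supp_sh_w) (use k rp w' in auto)
    then show ?thesis using w' k rp s unfolding short_word_def shuffle_shape_def by auto
  qed
qed

lemma short_word_letter_assoc_lhs:
  fixes \<alpha> \<beta> \<gamma> :: "'k::{finite,field}"
  assumes a: "1 \<le> a" and b: "1 \<le> b" and c: "1 \<le> c"
    and w: "w \<in> supp (letter_assoc_lhs (a, \<alpha>) (b, \<beta>) (c, \<gamma>))"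
  shows "short_word (a + b + c) (\<alpha> * \<beta> * \<gamma>) w"
  using in_supp_dm_split[OF w[unfolded letter_assoc_lhs_def]]
proof
  assume "w \<in> supp (dm_split (a + b, \<alpha> * \<beta>) (c, \<gamma>) (\<lambda>m t. pre m (sh_w t [])))"
  then show ?thesis by (rule short_word_dm_split[rotated 5]) (use a c in auto)
next
  assume "\<exists>k\<in>{1..<a+b}. w \<in> supp (dm_split (a + b - k, \<alpha> * \<beta>) (c, \<gamma>) (\<lambda>m t. pre m (sh_w t [(k, 1)])))"
  then obtain k where k: "k \<in> {1..<a+b}" "w \<in> supp (dm_split (a + b - k, \<alpha> * \<beta>) (c, \<gamma>) (\<lambda>m t. pre m (sh_w t [(k, 1)])))" by blast
  show ?thesis by (rule short_word_dm_split[OF _ _ _ _ _ k(2)]) (use k c in auto)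
qed

lemma short_word_letter_assoc_rhs:
  fixes \<alpha> \<beta> \<gamma> :: "'k::{finite,field}"
  assumes a: "1 \<le> a" and b: "1 \<le> b" and c: "1 \<le> c"
    and w: "w \<in> supp (letter_assoc_rhs (a, \<alpha>) (b, \<beta>) (c, \<gamma>))"
  shows "short_word (a + b + c) (\<alpha> * \<beta> * \<gamma>) w"
  using in_supp_dm_split[OF w[unfolded letter_assoc_rhs_def]]
proof
  assume "w \<in> supp (dm_split (a, \<alpha>) (b + c, \<beta> * \<gamma>) (\<lambda>m t'. pre m (sh_w t' [])))"
  then show ?thesis by (rule short_word_dm_split[rotated 5]) (use a b in \<open>auto simp: mult.assoc\<close>)
next
  assume "\<exists>k\<in>{1..<b+c}. w \<in> supp (dm_split (a, \<alpha>) (b + c - k, \<beta> * \<gamma>) (\<lambda>m t'. pre m (sh_w t' [(k, 1)])))"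
  then obtain k where k: "k \<in> {1..<b+c}" "w \<in> supp (dm_split (a, \<alpha>) (b + c - k, \<beta> * \<gamma>) (\<lambda>m t'. pre m (sh_w t' [(k, 1)])))" by blast
  show ?thesis by (rule short_word_dm_split[OF _ _ _ _ _ k(2)]) (use k a in \<open>auto simp: mult.assoc\<close>)
qed

lemma sum_eq_single:
  "finite A \<Longrightarrow> a \<in> A \<Longrightarrow> (\<And>x. x \<in> A \<Longrightarrow> x \<noteq> a \<Longrightarrow> f x = 0) \<Longrightarrow> sum f A = f a"
  by (simp add: sum.remove sum.neutral)

lemma psum1_nth_neg: "1 \<le> n \<Longrightarrow> (psum1 j :: 'k::{finite,field} fls) $$ (- int n) = (if n = j then 1 else 0)"
  by (rule inv_power_sum_nth_neg) auto

lemma psum2_nth_neg: "1 \<le> n \<Longrightarrow> (psum2 j :: 'k::{finite,field} fls fls) $$ (- int n) = (if n = j then 1 else 0)"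
  using fin_add_subgroup_lin_polys unfolding fin_add_subgroup_def by (blast intro: inv_power_sum_nth_neg)

lemma label_one_short_cases:
  "label_one t \<Longrightarrow> length t \<le> 2 \<Longrightarrow> t = [] \<or> (\<exists>j. t = [(j, 1)]) \<or> (\<exists>j k. t = [(j, 1), (k, 1)])"
  by (cases t rule: remdups_adj.cases) (auto simp: prod_eq_iff)

lemma tail_val_nth_neg:
  assumes "1 \<le> n" "label_one t" "length t \<le> 2"
  shows "(tail_val t :: 'k::{finite,field} fls) $$ (- int n) = (if t \<noteq> [] \<and> fst (hd t) = n then 1 else 0)"
  using label_one_short_cases[OF assms(2,3)] assms(1) by (auto simp: psum1_nth_neg)

lemma word_eval_nth_neg:
  fixes V :: "'k::{finite,field} vec"
  assumes fin: "finsupp V" and G: "\<And>w. w \<in> supp V \<Longrightarrow> short_word s e w" and m: "1 \<le> m"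
  shows "(word_eval s e V) $$ (- int m) = (\<Sum>w\<in>supp V. fls_const (V w) * (if fst (hd w) = m then tail_val (tl w) else 0))"
proof -
  have "(word_eval s e V) $$ (- int m) = (\<Sum>w\<in>supp V. (fls_const (fls_const (V w)) * word_val s e w) $$ (- int m))"
    by (simp add: word_eval_def lin_fun_def fls_nth_sum)
  also have "\<dots> = (\<Sum>w\<in>supp V. fls_const (V w) * (if fst (hd w) = m then tail_val (tl w) else 0))"
  proof (intro sum.cong refl)
    fix w assume "w \<in> supp V"
    then obtain i t where w: "w = (i, e) # t" "1 \<le> i" "i \<le> s" "label_one t" "pos_word t" "length t \<le> 2" "i + word_weight t = s"
      using G unfolding short_word_def by blast
    have "word_val s e w = psum2 i * fls_const (tail_val t)"
      using w by (simp add: word_val_def tail_val_at_def)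
    then show "(fls_const (fls_const (V w)) * word_val s e w) $$ (- int m) = fls_const (V w) * (if fst (hd w) = m then tail_val (tl w) else 0)"
      using w m by (simp add: psum2_nth_neg mult.assoc)
  qed
  finally show ?thesis .
qed

lemma short_word_eq_of_tail_Nil:
  assumes "short_word s e w" "short_word s e w'" "fst (hd w) = fst (hd w')" "tl w = []"
  shows "w = w'"
proof -
  obtain i where w: "w = [(i, e)]" "i = s"
    using assms(1,4) unfolding short_word_def by auto
  obtain t' where w': "w' = (s, e) # t'" "pos_word t'" "word_weight t' = 0"
    using assms(2,3) w unfolding short_word_def by auto
  then show ?thesis using w word_weight_eq_0[of t'] by simp
qed

lemma label_one_eq_of_length_le_1:
  "label_one r \<Longrightarrow> label_one r' \<Longrightarrow> pos_word r \<Longrightarrow> pos_word r' \<Longrightarrow>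
    length r \<le> 1 \<Longrightarrow> length r' \<le> 1 \<Longrightarrow> word_weight r = word_weight r' \<Longrightarrow> r = r'"
  by (cases r; cases r') (auto simp: prod_eq_iff)

lemma short_word_eq_of_tail_hd:
  assumes "short_word s e w" "short_word s e w'" "fst (hd w) = fst (hd w')"
    and "tl w \<noteq> []" "tl w' \<noteq> []" "fst (hd (tl w)) = fst (hd (tl w'))"
  shows "w = w'"
proof -
  obtain i n r where w: "w = (i, e) # (n, 1) # r" "label_one r" "pos_word r" "length r \<le> 1"
      "i + n + word_weight r = s"
    using assms(1,4) unfolding short_word_def by (auto simp: neq_Nil_conv)
  obtain r' where w': "w' = (i, e) # (n, 1) # r'" "label_one r'" "pos_word r'" "length r' \<le> 1"
      "i + n + word_weight r' = s"
    using assms(2,3,5,6) w unfolding short_word_def by (auto simp: neq_Nil_conv)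
  have "r = r'" using w w' by (intro label_one_eq_of_length_le_1) simp_all
  then show ?thesis using w w' by simp
qed

text \<open>The coefficient of Y^(-i) of word_eval s e V collects the words with first letter of
  weight i; it is fls_const (V w) for the word w = [(s, e)], and otherwise its coefficient of
  X^(-n) isolates the word with second letter of weight n.\<close>

lemma word_eval_eq_0D:
  fixes V :: "'k::{finite,field} vec"
  assumes fin: "finsupp V" and short: "\<And>w. w \<in> supp V \<Longrightarrow> short_word s e w" and z: "word_eval s e V = 0"
  shows "V = 0"
proof (rule ccontr)
  assume "V \<noteq> 0"
  then obtain w0 where w0s: "w0 \<in> supp V" by (auto simp: supp_def fun_eq_iff)
  obtain i0 t0 where w0: "w0 = (i0, e) # t0" "1 \<le> i0" "label_one t0" "pos_word t0" "length t0 \<le> 2"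
    using short[OF w0s] unfolding short_word_def by blast
  have finS: "finite (supp V)" using fin by (simp add: finsupp_def)
  define c where "c w = (if fst (hd w) = i0 then tail_val (tl w) else (0 :: 'k fls))" for w
  have C: "(\<Sum>w\<in>supp V. fls_const (V w) * c w) = 0"
    using word_eval_nth_neg[OF fin short w0(2)] z by (simp add: c_def)
  have "V w0 = 0"
  proof (cases t0)
    case Nil
    have "(\<Sum>w\<in>supp V. fls_const (V w) * c w) = fls_const (V w0) * c w0"
    proof (rule sum_eq_single[OF finS w0s])
      fix w assume "w \<in> supp V" "w \<noteq> w0"
      then show "fls_const (V w) * c w = 0"
        using short_word_eq_of_tail_Nil[OF short[OF w0s] short] w0 Nil by (auto simp: c_def)
    qed
    then show ?thesis using C w0 Nil by (simp add: c_def)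
  next
    case (Cons p rest)
    define n where "n = fst p"
    have n: "1 \<le> n" "tl w0 \<noteq> []" "fst (hd (tl w0)) = n" using w0 Cons by (auto simp: n_def)
    have "(\<Sum>w\<in>supp V. V w * (c w $$ (- int n))) = V w0 * (c w0 $$ (- int n))"
    proof (rule sum_eq_single[OF finS w0s])
      fix w assume ws: "w \<in> supp V" and "w \<noteq> w0"
      then have "\<not> (fst (hd w) = i0 \<and> tl w \<noteq> [] \<and> fst (hd (tl w)) = n)"
        using short_word_eq_of_tail_hd[OF short[OF w0s] short[OF ws]] w0 n by auto
      moreover obtain i t where "w = (i, e) # t" "label_one t" "length t \<le> 2"
        using short[OF ws] unfolding short_word_def by blast
      ultimately show "V w * (c w $$ (- int n)) = 0" using n by (auto simp: c_def tail_val_nth_neg)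
    qed
    also have "\<dots> = V w0" using w0 n by (simp add: c_def tail_val_nth_neg)
    finally show ?thesis using arg_cong[OF C, of "\<lambda>F. F $$ (- int n)"] by (simp add: fls_nth_sum)
  qed
  then show False using w0s by (simp add: supp_def)
qed

lemma word_eval_diff:
  "finsupp U \<Longrightarrow> finsupp V \<Longrightarrow>
    word_eval s e (U + smul (-1) V) = word_eval s e U - word_eval s e (V :: 'k::{finite,field} vec)"
  by (simp add: word_eval_def fls_const2_hom.lin_fun_add fls_const2_hom.lin_fun_smul fls_const_uminus)

lemma letter_assoc:
  fixes x y z :: "'k::{finite,field} letter"
  assumes "1 \<le> fst x" "1 \<le> fst y" "1 \<le> fst z"
  shows "letter_assoc_lhs x y z = letter_assoc_rhs x y z"
proof -
  obtain a \<alpha> b \<beta> c \<gamma> where xyz: "x = (a, \<alpha>)" "y = (b, \<beta>)" "z = (c, \<gamma>)" by (cases x, cases y, cases z)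
  have a: "1 \<le> a" and b: "1 \<le> b" and c: "1 \<le> c" using assms xyz by auto
  let ?L = "letter_assoc_lhs x y z" and ?R = "letter_assoc_rhs x y z"
  let ?D = "?L + smul (-1) ?R"
  have fL: "finsupp ?L" and fR: "finsupp ?R" by (auto simp: letter_assoc_lhs_def letter_assoc_rhs_def)
  have "?D = 0"
  proof (rule word_eval_eq_0D[where s = "a + b + c" and e = "\<alpha> * \<beta> * \<gamma>"])
    show "finsupp ?D" using fL fR by simp
    fix w assume "w \<in> supp ?D"
    then have "w \<in> supp ?L \<or> w \<in> supp ?R" by (auto dest!: in_supp_add in_supp_smul)
    then show "short_word (a + b + c) (\<alpha> * \<beta> * \<gamma>) w"
      using short_word_letter_assoc_lhs[OF a b c] short_word_letter_assoc_rhs[OF a b c] xyz by auto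
  next
    have l: "word_eval (a + b + c) (\<alpha> * \<beta> * \<gamma>) ?L = psum2 a * psum2 b * psum2 c" unfolding xyz by (rule word_eval_letter_assoc_lhs[OF a b c])
    have r: "word_eval (a + b + c) (\<alpha> * \<beta> * \<gamma>) ?R = psum2 a * psum2 b * psum2 c" unfolding xyz by (rule word_eval_letter_assoc_rhs[OF a b c])
    show "word_eval (a + b + c) (\<alpha> * \<beta> * \<gamma>) ?D = 0"
      using word_eval_diff[OF fL fR] l r by simp
  qed
  show ?thesis
  proof (rule ext)
    fix w
    have "?D w = 0" using \<open>?D = 0\<close> by simp
    then show "?L w = ?R w" by (simp add: smul_def)
  qed
qed

section \<open>Associativity\<close>

lemma shuffle_dm_step_pre:
  fixes S C :: "'k::{finite,field} vec"
  assumes S: "finsupp S" and C: "finsupp C"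
  shows "shuffle (dm_step x y S) (pre z C) =
      dm_split x y (\<lambda>l r. pre l (shuffle (shuffle (basis r) S) (pre z C)))
    + pre z (shuffle (dm_step x y S) C)
    + dm_split x y (\<lambda>l r. dm_step l z (shuffle (shuffle (basis r) S) C))"
proof -
  have "shuffle (dm_step x y S) (pre z C) = dm_split x y (\<lambda>l r. shuffle (pre l (shuffle (basis r) S)) (pre z C))"
    unfolding dm_step_eq_dm_split[OF S] using S C by (intro fs_linear_dm_split fs_linear_shuffle_left) auto
  also have "\<dots> = dm_split x y (\<lambda>l r. pre l (shuffle (shuffle (basis r) S) (pre z C))
      + pre z (shuffle (pre l (shuffle (basis r) S)) C) + dm_step l z (shuffle (shuffle (basis r) S) C))"
    using S C by (subst shuffle_pre_pre) auto
  also have "\<dots> = dm_split x y (\<lambda>l r. pre l (shuffle (shuffle (basis r) S) (pre z C)))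
      + dm_split x y (\<lambda>l r. pre z (shuffle (pre l (shuffle (basis r) S)) C))
      + dm_split x y (\<lambda>l r. dm_step l z (shuffle (shuffle (basis r) S) C))"
    by (simp only: dm_split_add)
  also have "dm_split x y (\<lambda>l r. pre z (shuffle (pre l (shuffle (basis r) S)) C)) = pre z (shuffle (dm_step x y S) C)"
    unfolding dm_step_eq_dm_split[OF S] using S C
    by (intro fs_linear_dm_split[symmetric] fs_linear_comp[OF fs_linear_pre fs_linear_shuffle_left]) auto
  finally show ?thesis .
qed

lemma shuffle_pre_dm_step:
  fixes A T :: "'k::{finite,field} vec"
  assumes A: "finsupp A" and T: "finsupp T"
  shows "shuffle (pre x A) (dm_step y z T) =
      pre x (shuffle A (dm_step y z T))
    + dm_split y z (\<lambda>m t. pre m (shuffle (pre x A) (shuffle (basis t) T)))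
    + dm_split y z (\<lambda>m t. dm_step x m (shuffle A (shuffle (basis t) T)))"
proof -
  have "shuffle (pre x A) (dm_step y z T) = dm_split y z (\<lambda>m t. shuffle (pre x A) (pre m (shuffle (basis t) T)))"
    unfolding dm_step_eq_dm_split[OF T] using A T by (intro fs_linear_dm_split fs_linear_shuffle_right) auto
  also have "\<dots> = dm_split y z (\<lambda>m t. pre x (shuffle A (pre m (shuffle (basis t) T)))
      + pre m (shuffle (pre x A) (shuffle (basis t) T)) + dm_step x m (shuffle A (shuffle (basis t) T)))"
    using A T by (subst shuffle_pre_pre) auto
  also have "\<dots> = dm_split y z (\<lambda>m t. pre x (shuffle A (pre m (shuffle (basis t) T))))
      + dm_split y z (\<lambda>m t. pre m (shuffle (pre x A) (shuffle (basis t) T)))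
      + dm_split y z (\<lambda>m t. dm_step x m (shuffle A (shuffle (basis t) T)))"
    by (simp only: dm_split_add)
  also have "dm_split y z (\<lambda>m t. pre x (shuffle A (pre m (shuffle (basis t) T)))) = pre x (shuffle A (dm_step y z T))"
    unfolding dm_step_eq_dm_split[OF T] using A T
    by (intro fs_linear_dm_split[symmetric] fs_linear_comp[OF fs_linear_pre fs_linear_shuffle_right]) auto
  finally show ?thesis .
qed

lemma shuffle_sh_w_basis_expand:
  fixes x y z :: "'k::{finite,field} letter"
  shows "shuffle (sh_w (x # a) (y # b)) (basis (z # c)) =
    pre x (shuffle (sh_w a (y # b)) (basis (z # c))) + pre y (shuffle (sh_w (x # a) b) (basis (z # c)))
  + pre z (shuffle (sh_w (x # a) (y # b)) (basis c))
  + dm_step x z (shuffle (sh_w a (y # b)) (basis c)) + dm_step y z (shuffle (sh_w (x # a) b) (basis c))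
  + dm_split x y (\<lambda>l r. pre l (shuffle (shuffle (basis r) (sh_w a b)) (basis (z # c))))
  + dm_split x y (\<lambda>l r. dm_step l z (shuffle (shuffle (basis r) (sh_w a b)) (basis c)))"
proof -
  let ?S = "sh_w a b :: 'k vec" and ?C = "basis c :: 'k vec"
  let ?V1 = "sh_w a (y # b) :: 'k vec" and ?V2 = "sh_w (x # a) b :: 'k vec"
  have "shuffle (sh_w (x # a) (y # b)) (basis (z # c)) =
      shuffle (pre x ?V1) (pre z ?C) + shuffle (pre y ?V2) (pre z ?C) + shuffle (dm_step x y ?S) (pre z ?C)"
    by (simp add: shuffle_add_left del: pre_basis flip: pre_basis)
  moreover have "pre z (shuffle (sh_w (x # a) (y # b)) ?C) =
      pre z (shuffle (pre x ?V1) ?C) + pre z (shuffle (pre y ?V2) ?C) + pre z (shuffle (dm_step x y ?S) ?C)"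
    by (simp add: shuffle_add_left pre_add)
  ultimately show ?thesis
    using shuffle_pre_pre[of ?V1 ?C x z] shuffle_pre_pre[of ?V2 ?C y z] shuffle_dm_step_pre[of ?S ?C x y z]
    by (simp add: ac_simps)
qed

lemma shuffle_basis_sh_w_expand:
  fixes x y z :: "'k::{finite,field} letter"
  shows "shuffle (basis (x # a)) (sh_w (y # b) (z # c)) =
    pre x (shuffle (basis a) (sh_w (y # b) (z # c))) + pre y (shuffle (basis (x # a)) (sh_w b (z # c)))
  + pre z (shuffle (basis (x # a)) (sh_w (y # b) c))
  + dm_step x y (shuffle (basis a) (sh_w b (z # c))) + dm_step x z (shuffle (basis a) (sh_w (y # b) c))
  + dm_split y z (\<lambda>m t. pre m (shuffle (basis (x # a)) (shuffle (basis t) (sh_w b c))))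
  + dm_split y z (\<lambda>m t. dm_step x m (shuffle (basis a) (shuffle (basis t) (sh_w b c))))"
proof -
  let ?T = "sh_w b c :: 'k vec" and ?A = "basis a :: 'k vec"
  let ?W1 = "sh_w b (z # c) :: 'k vec" and ?W2 = "sh_w (y # b) c :: 'k vec"
  have "shuffle (basis (x # a)) (sh_w (y # b) (z # c)) =
      shuffle (pre x ?A) (pre y ?W1) + shuffle (pre x ?A) (pre z ?W2) + shuffle (pre x ?A) (dm_step y z ?T)"
    by (simp add: shuffle_add_right del: pre_basis flip: pre_basis)
  moreover have "pre x (shuffle ?A (sh_w (y # b) (z # c))) =
      pre x (shuffle ?A (pre y ?W1)) + pre x (shuffle ?A (pre z ?W2)) + pre x (shuffle ?A (dm_step y z ?T))"
    by (simp add: shuffle_add_right pre_add)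
  ultimately show ?thesis
    using shuffle_pre_pre[of ?A ?W1 x y] shuffle_pre_pre[of ?A ?W2 x z] shuffle_pre_dm_step[of ?A ?T x y z]
    by (simp add: ac_simps)
qed

definition pos_vec :: "'k::comm_ring_1 vec \<Rightarrow> bool" where
  "pos_vec A \<longleftrightarrow> (\<forall>w\<in>supp A. pos_word w)"

definition bounded_pos :: "nat \<Rightarrow> 'k::comm_ring_1 vec \<Rightarrow> bool" where
  "bounded_pos n A \<longleftrightarrow> finsupp A \<and> (\<forall>w\<in>supp A. pos_word w \<and> length w \<le> n)"

lemma bounded_pos_basis: "pos_word a \<Longrightarrow> length a \<le> n \<Longrightarrow> bounded_pos n (basis a :: 'k::comm_ring_1 vec)"
  by (simp add: bounded_pos_def supp_basis)

lemma bounded_pos_finsupp: "bounded_pos n A \<Longrightarrow> finsupp A"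
  by (simp add: bounded_pos_def)

lemma bounded_pos_shuffle:
  assumes "bounded_pos p A" "bounded_pos q B"
  shows "bounded_pos (p + q) (shuffle A (B :: 'k::{finite,field} vec))"
proof -
  have "pos_word w \<and> length w \<le> p + q" if w: "w \<in> supp (shuffle A B)" for w
  proof -
    obtain a b where ab: "a \<in> supp A" "b \<in> supp B" "w \<in> supp (sh_w a b)"
      using w supp_bil_ext[of sh_w A B] unfolding shuffle_def by blast
    have "pos_word a" "length a \<le> p" "pos_word b" "length b \<le> q"
      using assms ab by (auto simp: bounded_pos_def)
    then show ?thesis using supp_sh_w[OF _ _ ab(3)] by (auto simp: shuffle_shape_def)
  qed
  then show ?thesis using assms by (simp add: bounded_pos_def)
qed

lemma bounded_pos_sh_w:
  "pos_word a \<Longrightarrow> pos_word b \<Longrightarrow> bounded_pos (length a + length b) (sh_w a b :: 'k::{finite,field} vec)"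
  using bounded_pos_shuffle[OF bounded_pos_basis[of a "length a"] bounded_pos_basis[of b "length b"]] by simp

lemma bounded_pos_dm_tail: "dm_tail t \<Longrightarrow> bounded_pos 1 (basis t :: 'k::comm_ring_1 vec)"
  by (auto simp: dm_tail_def intro!: bounded_pos_basis)

definition tail_shuffle :: "'k::{finite,field} vec \<Rightarrow> 'k vec \<Rightarrow> 'k vec" where
  "tail_shuffle U = lin_ext (\<lambda>w. case w of [] \<Rightarrow> 0 | m # t \<Rightarrow> pre m (shuffle (basis t) U))"

lemma tail_shuffle_pre:
  assumes W: "finsupp W" and U: "finsupp U"
  shows "tail_shuffle U (pre m W) = pre m (shuffle W U)"
proof -
  have L: "fs_linear (\<lambda>W. tail_shuffle U (pre m W))" unfolding tail_shuffle_def
    by (rule fs_linear_comp[OF fs_linear_lin_ext fs_linear_pre]) auto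
  have R: "fs_linear (\<lambda>W. pre m (shuffle W U))"
    using U by (intro fs_linear_comp[OF fs_linear_pre fs_linear_shuffle_left]) auto
  show ?thesis using fs_linear_eqI[OF L R W] by (simp add: tail_shuffle_def)
qed

lemma tail_shuffle_dm_split:
  "(\<And>l r. finsupp (H l r)) \<Longrightarrow> tail_shuffle U (dm_split x y H) = dm_split x y (\<lambda>l r. tail_shuffle U (H l r))"
  unfolding tail_shuffle_def by (rule fs_linear_dm_split[OF fs_linear_lin_ext])

lemma tail_shuffle_letter_assoc_lhs:
  "finsupp U \<Longrightarrow> tail_shuffle U (letter_assoc_lhs x y z)
    = dm_split x y (\<lambda>l r. dm_split l z (\<lambda>m t. pre m (shuffle (sh_w t r) U)))"
  unfolding letter_assoc_lhs_def by (simp add: tail_shuffle_dm_split tail_shuffle_pre)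

lemma tail_shuffle_letter_assoc_rhs:
  "finsupp U \<Longrightarrow> tail_shuffle U (letter_assoc_rhs x y z)
    = dm_split y z (\<lambda>l t. dm_split x l (\<lambda>m t'. pre m (shuffle (sh_w t' t) U)))"
  unfolding letter_assoc_rhs_def by (simp add: tail_shuffle_dm_split tail_shuffle_pre)

lemma shuffle_left_commute_below:
  fixes A B C :: "'k::{finite,field} vec"
  assumes IH: "\<And>A B C p q r. bounded_pos p A \<Longrightarrow> bounded_pos q B \<Longrightarrow> bounded_pos r C \<Longrightarrow>
      p + q + r < N \<Longrightarrow> shuffle (shuffle A B) C = shuffle A (shuffle B (C :: 'k vec))"
    and A: "bounded_pos p A" and B: "bounded_pos q B" and C: "bounded_pos r C" and N: "p + q + r < N"
  shows "shuffle A (shuffle B C) = shuffle B (shuffle A C)"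
proof -
  have "shuffle A (shuffle B C) = shuffle (shuffle A B) C" using IH[OF A B C N] by simp
  also have "\<dots> = shuffle (shuffle B A) C"
    using shuffle_commute[OF bounded_pos_finsupp[OF A] bounded_pos_finsupp[OF B]] by simp
  also have "\<dots> = shuffle B (shuffle A C)" using IH[OF B A C] N by simp
  finally show ?thesis .
qed

lemma dm_step_eq_dm_split_cong:
  assumes "1 \<le> fst x" "finsupp S" "\<And>t. dm_tail t \<Longrightarrow> shuffle (basis t) S = F t"
  shows "dm_step x y S = dm_split x y (\<lambda>l t. pre l (F t :: 'k::{finite,field} vec))"
proof -
  have "dm_step x y S = dm_split x y (\<lambda>l t. pre l (shuffle (basis t) S))"
    by (rule dm_step_eq_dm_split[OF assms(2)])
  also have "\<dots> = dm_split x y (\<lambda>l t. pre l (F t))"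
    by (rule dm_split_cong[OF assms(1)]) (simp add: assms(3))
  finally show ?thesis .
qed

lemma dm_split_dm_step_lhs:
  fixes a b c :: "'k::{finite,field} word"
  assumes IH: "\<And>A B C p q r. bounded_pos p A \<Longrightarrow> bounded_pos q B \<Longrightarrow> bounded_pos r C \<Longrightarrow>
      p + q + r < length (x # a) + length (y # b) + length (z # c) \<Longrightarrow>
      shuffle (shuffle A B) C = shuffle A (shuffle B (C :: 'k vec))"
    and px: "1 \<le> fst x" and pa: "pos_word a" and pb: "pos_word b" and pc: "pos_word c"
  shows "dm_split x y (\<lambda>l r. dm_step l z (shuffle (shuffle (basis r) (sh_w a b)) (basis c)))
    = tail_shuffle (shuffle (sh_w a b) (basis c)) (letter_assoc_lhs x y z)"
proof -
  let ?S = "sh_w a b :: 'k vec"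
  let ?U = "shuffle ?S (basis c)"
  have S: "bounded_pos (length a + length b) ?S" using bounded_pos_sh_w[OF pa pb] .
  have C: "bounded_pos (length c) (basis c :: 'k vec)" using pc by (rule bounded_pos_basis) simp
  have U: "bounded_pos (length a + length b + length c) ?U" using bounded_pos_shuffle[OF S C] .
  have "dm_step l z (shuffle (shuffle (basis r) ?S) (basis c)) = dm_split l z (\<lambda>m t. pre m (shuffle (sh_w t r) ?U))"
    if l: "1 \<le> fst l" and r: "dm_tail r" for l r
  proof (rule dm_step_eq_dm_split_cong[OF l])
    fix t :: "'k word" assume t: "dm_tail t"
    have "shuffle (shuffle (basis r) ?S) (basis c) = shuffle (basis r) ?U"
      using IH[OF bounded_pos_dm_tail[OF r] S C] by simp
    moreover have "shuffle (basis t) (shuffle (basis r) ?U) = shuffle (shuffle (basis t) (basis r)) ?U"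
      using IH[OF bounded_pos_dm_tail[OF t] bounded_pos_dm_tail[OF r] U] by simp
    ultimately show "shuffle (basis t) (shuffle (shuffle (basis r) ?S) (basis c)) = shuffle (sh_w t r) ?U"
      by simp
  qed simp
  then have "dm_split x y (\<lambda>l r. dm_step l z (shuffle (shuffle (basis r) ?S) (basis c)))
      = dm_split x y (\<lambda>l r. dm_split l z (\<lambda>m t. pre m (shuffle (sh_w t r) ?U)))"
    by (intro dm_split_cong[OF px])
  also have "\<dots> = tail_shuffle ?U (letter_assoc_lhs x y z)"
    using tail_shuffle_letter_assoc_lhs[OF bounded_pos_finsupp[OF U]] by simp
  finally show ?thesis .
qed

lemma dm_split_dm_step_rhs:
  fixes a b c :: "'k::{finite,field} word"
  assumes IH: "\<And>A B C p q r. bounded_pos p A \<Longrightarrow> bounded_pos q B \<Longrightarrow> bounded_pos r C \<Longrightarrow>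
      p + q + r < length (x # a) + length (y # b) + length (z # c) \<Longrightarrow>
      shuffle (shuffle A B) C = shuffle A (shuffle B (C :: 'k vec))"
    and px: "1 \<le> fst x" and py: "1 \<le> fst y" and pa: "pos_word a" and pb: "pos_word b" and pc: "pos_word c"
  shows "dm_split y z (\<lambda>m t. dm_step x m (shuffle (basis a) (shuffle (basis t) (sh_w b c))))
    = tail_shuffle (shuffle (sh_w a b) (basis c)) (letter_assoc_rhs x y z)"
proof -
  let ?T = "sh_w b c :: 'k vec"
  let ?U = "shuffle (sh_w a b) (basis c) :: 'k vec"
  have A: "bounded_pos (length a) (basis a :: 'k vec)" using pa by (rule bounded_pos_basis) simp
  have B: "bounded_pos (length b) (basis b :: 'k vec)" using pb by (rule bounded_pos_basis) simp
  have C: "bounded_pos (length c) (basis c :: 'k vec)" using pc by (rule bounded_pos_basis) simp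
  have T: "bounded_pos (length b + length c) ?T" using bounded_pos_sh_w[OF pb pc] .
  have U: "bounded_pos (length a + length b + length c) ?U"
    using bounded_pos_shuffle[OF bounded_pos_sh_w[OF pa pb] C] .
  have "dm_step x l (shuffle (basis a) (shuffle (basis t) ?T)) = dm_split x l (\<lambda>m t'. pre m (shuffle (sh_w t' t) ?U))"
    if t: "dm_tail t" for l t
  proof -
    have tU: "shuffle (basis a) (shuffle (basis t) ?T) = shuffle (basis t) ?U"
      using shuffle_left_commute_below[OF IH A bounded_pos_dm_tail[OF t] T] IH[OF A B C] by simp
    show ?thesis unfolding tU
    proof (rule dm_step_eq_dm_split_cong[OF px])
      fix t' :: "'k word" assume t': "dm_tail t'"
      show "shuffle (basis t') (shuffle (basis t) ?U) = shuffle (sh_w t' t) ?U"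
        using IH[OF bounded_pos_dm_tail[OF t'] bounded_pos_dm_tail[OF t] U] by simp
    qed (simp add: bounded_pos_finsupp[OF U])
  qed
  then have "dm_split y z (\<lambda>m t. dm_step x m (shuffle (basis a) (shuffle (basis t) ?T)))
      = dm_split y z (\<lambda>l t. dm_split x l (\<lambda>m t'. pre m (shuffle (sh_w t' t) ?U)))"
    by (intro dm_split_cong[OF py])
  also have "\<dots> = tail_shuffle ?U (letter_assoc_rhs x y z)"
    using tail_shuffle_letter_assoc_rhs[OF bounded_pos_finsupp[OF U]] by simp
  finally show ?thesis .
qed

lemma dm_split_dm_step_assoc:
  fixes a b c :: "'k::{finite,field} word"
  assumes IH: "\<And>A B C p q r. bounded_pos p A \<Longrightarrow> bounded_pos q B \<Longrightarrow> bounded_pos r C \<Longrightarrow>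
      p + q + r < length (x # a) + length (y # b) + length (z # c) \<Longrightarrow>
      shuffle (shuffle A B) C = shuffle A (shuffle B (C :: 'k vec))"
    and px: "1 \<le> fst x" and py: "1 \<le> fst y" and pz: "1 \<le> fst z"
    and pa: "pos_word a" and pb: "pos_word b" and pc: "pos_word c"
  shows "dm_split x y (\<lambda>l r. dm_step l z (shuffle (shuffle (basis r) (sh_w a b)) (basis c))) =
    dm_split y z (\<lambda>m t. dm_step x m (shuffle (basis a) (shuffle (basis t) (sh_w b c))))"
  using dm_split_dm_step_lhs[OF IH px pa pb pc] dm_split_dm_step_rhs[OF IH px py pa pb pc]
    letter_assoc[OF px py pz] by simp

lemma dm_step_shuffle_sh_w_basis:
  fixes a b c :: "'k::{finite,field} word"
  assumes IH: "\<And>A B C p q r. bounded_pos p A \<Longrightarrow> bounded_pos q B \<Longrightarrow> bounded_pos r C \<Longrightarrow>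
      p + q + r < length (x # a) + length (y # b) + length (z # c) \<Longrightarrow>
      shuffle (shuffle A B) C = shuffle A (shuffle B (C :: 'k vec))"
    and py: "1 \<le> fst y" and pxa: "pos_word (x # a)" and pb: "pos_word b" and pc: "pos_word c"
  shows "dm_step y z (shuffle (sh_w (x # a) b) (basis c))
    = dm_split y z (\<lambda>m t. pre m (shuffle (basis (x # a)) (shuffle (basis t) (sh_w b c))))"
proof (rule dm_step_eq_dm_split_cong[OF py])
  let ?T = "sh_w b c :: 'k vec"
  have XA: "bounded_pos (length (x # a)) (basis (x # a) :: 'k vec)" using pxa by (rule bounded_pos_basis) simp
  have B: "bounded_pos (length b) (basis b :: 'k vec)" using pb by (rule bounded_pos_basis) simp
  have C: "bounded_pos (length c) (basis c :: 'k vec)" using pc by (rule bounded_pos_basis) simp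
  have T: "bounded_pos (length b + length c) ?T" using bounded_pos_sh_w[OF pb pc] .
  fix t :: "'k word" assume t: "dm_tail t"
  show "shuffle (basis t) (shuffle (sh_w (x # a) b) (basis c))
      = shuffle (basis (x # a)) (shuffle (basis t) ?T)"
    using shuffle_left_commute_below[OF IH XA bounded_pos_dm_tail[OF t] T] IH[OF XA B C] by simp
qed simp

lemma dm_step_shuffle_basis_sh_w:
  fixes a b c :: "'k::{finite,field} word"
  assumes IH: "\<And>A B C p q r. bounded_pos p A \<Longrightarrow> bounded_pos q B \<Longrightarrow> bounded_pos r C \<Longrightarrow>
      p + q + r < length (x # a) + length (y # b) + length (z # c) \<Longrightarrow>
      shuffle (shuffle A B) C = shuffle A (shuffle B (C :: 'k vec))"
    and px: "1 \<le> fst x" and pa: "pos_word a" and pb: "pos_word b" and pzc: "pos_word (z # c)"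
  shows "dm_step x y (shuffle (basis a) (sh_w b (z # c)))
    = dm_split x y (\<lambda>l r. pre l (shuffle (shuffle (basis r) (sh_w a b)) (basis (z # c))))"
proof (rule dm_step_eq_dm_split_cong[OF px])
  let ?S = "sh_w a b :: 'k vec"
  have A: "bounded_pos (length a) (basis a :: 'k vec)" using pa by (rule bounded_pos_basis) simp
  have B: "bounded_pos (length b) (basis b :: 'k vec)" using pb by (rule bounded_pos_basis) simp
  have ZC: "bounded_pos (length (z # c)) (basis (z # c) :: 'k vec)" using pzc by (rule bounded_pos_basis) simp
  fix r :: "'k word" assume r: "dm_tail r"
  have "shuffle (shuffle (basis r) ?S) (basis (z # c)) = shuffle (basis r) (shuffle ?S (basis (z # c)))"
    using IH[OF bounded_pos_dm_tail[OF r] bounded_pos_sh_w[OF pa pb] ZC] by simp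
  also have "shuffle ?S (basis (z # c)) = shuffle (basis a) (sh_w b (z # c))"
    using IH[OF A B ZC] by simp
  finally show "shuffle (basis r) (shuffle (basis a) (sh_w b (z # c)))
      = shuffle (shuffle (basis r) ?S) (basis (z # c))" ..
qed simp

lemma shuffle_assoc_step:
  fixes a b c :: "'k::{finite,field} word"
  assumes IH: "\<And>A B C p q r. bounded_pos p A \<Longrightarrow> bounded_pos q B \<Longrightarrow> bounded_pos r C \<Longrightarrow>
      p + q + r < length (x # a) + length (y # b) + length (z # c) \<Longrightarrow>
      shuffle (shuffle A B) C = shuffle A (shuffle B (C :: 'k vec))"
    and px: "1 \<le> fst x" and py: "1 \<le> fst y" and pz: "1 \<le> fst z"
    and pa: "pos_word a" and pb: "pos_word b" and pc: "pos_word c"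
  shows "shuffle (sh_w (x # a) (y # b)) (basis (z # c)) = shuffle (basis (x # a)) (sh_w (y # b) (z # c))"
proof -
  have pxa: "pos_word (x # a)" and pyb: "pos_word (y # b)" and pzc: "pos_word (z # c)"
    using px py pz pa pb pc by simp_all
  have bp: "bounded_pos (length w) (basis w :: 'k vec)" if "pos_word w" for w
    using that by (rule bounded_pos_basis) simp
  have "shuffle (sh_w a (y # b)) (basis (z # c)) = shuffle (basis a) (sh_w (y # b) (z # c))"
    "shuffle (sh_w (x # a) b) (basis (z # c)) = shuffle (basis (x # a)) (sh_w b (z # c))"
    "shuffle (sh_w (x # a) (y # b)) (basis c) = shuffle (basis (x # a)) (sh_w (y # b) c)"
    "shuffle (sh_w a (y # b)) (basis c) = shuffle (basis a) (sh_w (y # b) c)"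
    using IH[OF bp[OF pa] bp[OF pyb] bp[OF pzc]] IH[OF bp[OF pxa] bp[OF pb] bp[OF pzc]]
      IH[OF bp[OF pxa] bp[OF pyb] bp[OF pc]] IH[OF bp[OF pa] bp[OF pyb] bp[OF pc]]
    by simp_all
  moreover have "dm_step y z (shuffle (sh_w (x # a) b) (basis c))
      = dm_split y z (\<lambda>m t. pre m (shuffle (basis (x # a)) (shuffle (basis t) (sh_w b c))))"
    by (rule dm_step_shuffle_sh_w_basis[OF IH py pxa pb pc])
  moreover have "dm_step x y (shuffle (basis a) (sh_w b (z # c)))
      = dm_split x y (\<lambda>l r. pre l (shuffle (shuffle (basis r) (sh_w a b)) (basis (z # c))))"
    by (rule dm_step_shuffle_basis_sh_w[OF IH px pa pb pzc])
  moreover have "dm_split x y (\<lambda>l r. dm_step l z (shuffle (shuffle (basis r) (sh_w a b)) (basis c)))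
      = dm_split y z (\<lambda>m t. dm_step x m (shuffle (basis a) (shuffle (basis t) (sh_w b c))))"
    by (rule dm_split_dm_step_assoc[OF IH px py pz pa pb pc])
  ultimately show ?thesis
    unfolding shuffle_sh_w_basis_expand shuffle_basis_sh_w_expand by (simp only: ac_simps)
qed

lemma assoc_of_basis:
  fixes P :: "'k::comm_ring_1 vec \<Rightarrow> 'k vec \<Rightarrow> 'k vec"
  assumes left: "\<And>B. finsupp B \<Longrightarrow> fs_linear (\<lambda>A. P A B)"
    and right: "\<And>A. finsupp A \<Longrightarrow> fs_linear (\<lambda>B. P A B)"
    and fs: "\<And>A B. finsupp A \<Longrightarrow> finsupp B \<Longrightarrow> finsupp (P A B)"
    and A: "finsupp A" and B: "finsupp B" and C: "finsupp C"
    and words: "\<And>a b c. a \<in> supp A \<Longrightarrow> b \<in> supp B \<Longrightarrow> c \<in> supp C \<Longrightarrow>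
        P (P (basis a) (basis b)) (basis c) = P (basis a) (P (basis b) (basis c))"
  shows "P (P A B) C = P A (P B C)"
proof -
  have ab: "P (P (basis a) (basis b)) C = P (basis a) (P (basis b) C)" if "a \<in> supp A" "b \<in> supp B" for a b
  proof -
    have "fs_linear (\<lambda>C. P (P (basis a) (basis b)) C)" by (rule right) (simp add: fs)
    moreover have "fs_linear (\<lambda>C. P (basis a) (P (basis b) C))" by (rule fs_linear_comp[OF right right]) (auto simp: fs)
    ultimately show ?thesis using fs_linear_eqI[OF _ _ C] words[OF that] by blast
  qed
  have a: "P (P (basis a) B) C = P (basis a) (P B C)" if "a \<in> supp A" for a
  proof -
    have "fs_linear (\<lambda>B. P (P (basis a) B) C)" by (rule fs_linear_comp[OF left right]) (auto simp: fs C)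
    moreover have "fs_linear (\<lambda>B. P (basis a) (P B C))" by (rule fs_linear_comp[OF right left]) (auto simp: fs C)
    ultimately show ?thesis using fs_linear_eqI[OF _ _ B] ab[OF that] by blast
  qed
  have "fs_linear (\<lambda>A. P (P A B) C)" by (rule fs_linear_comp[OF left left]) (auto simp: fs B C)
  moreover have "fs_linear (\<lambda>A. P A (P B C))" by (rule left) (simp add: fs B C)
  ultimately show ?thesis using fs_linear_eqI[OF _ _ A] a by blast
qed

lemma shuffle_assoc_words:
  fixes a b c :: "'k::{finite,field} word"
  assumes "pos_word a" "pos_word b" "pos_word c"
  shows "shuffle (sh_w a b) (basis c) = shuffle (basis a) (sh_w b c)"
  using assms
proof (induct "length a + length b + length c" arbitrary: a b c rule: less_induct)
  case less
  have IH: "shuffle (shuffle A B) C = shuffle A (shuffle B C)"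
    if "bounded_pos p A" "bounded_pos q B" "bounded_pos r C" "p + q + r < length a + length b + length c"
    for A B C :: "'k vec" and p q r
  proof (rule assoc_of_basis[OF fs_linear_shuffle_left fs_linear_shuffle_right finsupp_shuffle])
    fix a' b' c' assume "a' \<in> supp A" "b' \<in> supp B" "c' \<in> supp C"
    then have "pos_word a' \<and> length a' \<le> p" "pos_word b' \<and> length b' \<le> q" "pos_word c' \<and> length c' \<le> r"
      using that by (auto simp: bounded_pos_def)
    then show "shuffle (shuffle (basis a') (basis b')) (basis c') = shuffle (basis a') (shuffle (basis b') (basis c'))"
      using less(1)[of a' b' c'] that(4) by simp
  qed (use that in \<open>simp_all add: bounded_pos_finsupp\<close>)
  consider "a = []" | "b = []" | "c = []" | x a' y b' z c' where "a = x # a'" "b = y # b'" "c = z # c'"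
    by (metis list.exhaust)
  then show ?case
  proof cases
    case 1 then show ?thesis by (simp add: shuffle_unit_left)
  next
    case 2 then show ?thesis by (cases a; cases c) auto
  next
    case 3 then show ?thesis by (cases b) (auto simp: shuffle_unit_right)
  next
    case 4
    then show ?thesis
      using shuffle_assoc_step[OF IH[unfolded 4]] less(2-4) by simp
  qed
qed

lemma shuffle_assoc:
  fixes A B C :: "'k::{finite,field} vec"
  assumes "finsupp A" "finsupp B" "finsupp C" "pos_vec A" "pos_vec B" "pos_vec C"
  shows "shuffle (shuffle A B) C = shuffle A (shuffle B C)"
proof (rule assoc_of_basis[OF fs_linear_shuffle_left fs_linear_shuffle_right finsupp_shuffle assms(1-3)])
  fix a b c assume "a \<in> supp A" "b \<in> supp B" "c \<in> supp C"
  then have "pos_word a" "pos_word b" "pos_word c" using assms by (auto simp: pos_vec_def)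
  then show "shuffle (shuffle (basis a) (basis b)) (basis c) = shuffle (basis a) (shuffle (basis b) (basis c))"
    using shuffle_assoc_words by simp
qed

lemma diamond_assoc_Cons:
  fixes a b c :: "'k::{finite,field} word"
  assumes px: "1 \<le> fst x" and py: "1 \<le> fst y" and pz: "1 \<le> fst z"
    and pa: "pos_word a" and pb: "pos_word b" and pc: "pos_word c"
  shows "diamond (dm_w (x # a) (y # b)) (basis (z # c)) = diamond (basis (x # a)) (dm_w (y # b) (z # c))"
proof -
  have IH: "shuffle (shuffle A B) C = shuffle A (shuffle B C)"
    if "bounded_pos p A" "bounded_pos q B" "bounded_pos r C" for A B C :: "'k vec" and p q r
    using that by (intro shuffle_assoc) (auto simp: bounded_pos_def pos_vec_def)
  let ?S = "sh_w a b :: 'k vec" and ?T = "sh_w b c :: 'k vec"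
  have left: "diamond (pre l A) (basis (z # c)) = dm_step l z (shuffle A (basis c))" if "finsupp A" for l A
    using diamond_pre_pre[OF that, of "basis c" l z] by simp
  have right: "diamond (basis (x # a)) (pre m B) = dm_step x m (shuffle (basis a) B)" if "finsupp B" for m B
    using diamond_pre_pre[OF _ that, of "basis a" x m] by simp
  have "diamond (dm_w (x # a) (y # b)) (basis (z # c))
      = diamond (dm_split x y (\<lambda>l r. pre l (shuffle (basis r) ?S))) (basis (z # c))"
    by (simp add: dm_step_eq_dm_split)
  also have "\<dots> = dm_split x y (\<lambda>l r. dm_step l z (shuffle (shuffle (basis r) ?S) (basis c)))"
    by (subst fs_linear_dm_split[OF fs_linear_diamond_left]) (simp_all add: left)
  also have "\<dots> = dm_split y z (\<lambda>m t. dm_step x m (shuffle (basis a) (shuffle (basis t) ?T)))"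
    by (rule dm_split_dm_step_assoc[OF IH px py pz pa pb pc])
  also have "\<dots> = diamond (basis (x # a)) (dm_split y z (\<lambda>m t. pre m (shuffle (basis t) ?T)))"
    by (subst fs_linear_dm_split[OF fs_linear_diamond_right]) (simp_all add: right)
  also have "\<dots> = diamond (basis (x # a)) (dm_w (y # b) (z # c))"
    by (simp add: dm_step_eq_dm_split)
  finally show ?thesis .
qed

lemma diamond_assoc_words:
  fixes a b c :: "'k::{finite,field} word"
  assumes "pos_word a" "pos_word b" "pos_word c"
  shows "diamond (dm_w a b) (basis c) = diamond (basis a) (dm_w b c)"
proof -
  consider "a = []" | "b = []" | "c = []" | x a' y b' z c' where "a = x # a'" "b = y # b'" "c = z # c'"
    by (metis list.exhaust)
  then show ?thesis
  proof cases
    case 1 then show ?thesis by (simp add: diamond_unit_left)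
  next
    case 2 then show ?thesis by (cases a; cases c) auto
  next
    case 3 then show ?thesis by (cases b) (auto simp: diamond_unit_right)
  next
    case 4 then show ?thesis using assms by (simp only:) (rule diamond_assoc_Cons; simp)
  qed
qed

lemma diamond_assoc:
  fixes A B C :: "'k::{finite,field} vec"
  assumes "finsupp A" "finsupp B" "finsupp C" "pos_vec A" "pos_vec B" "pos_vec C"
  shows "diamond (diamond A B) C = diamond A (diamond B C)"
proof (rule assoc_of_basis[OF fs_linear_diamond_left fs_linear_diamond_right finsupp_diamond assms(1-3)])
  fix a b c assume "a \<in> supp A" "b \<in> supp B" "c \<in> supp C"
  then have "pos_word a" "pos_word b" "pos_word c" using assms by (auto simp: pos_vec_def)
  then show "diamond (diamond (basis a) (basis b)) (basis c) = diamond (basis a) (diamond (basis b) (basis c))"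
    using diamond_assoc_words by simp
qed

lemma DD_imp_pos_vec: "u \<in> DD \<Longrightarrow> finsupp u \<and> pos_vec u"
  unfolding DD_def finsupp_def pos_vec_def valid_word_def pos_word_def by fastforce

theorem proposition5p8:
  fixes u v w :: "('k::{finite,field}) vec"
  assumes "u \<in> DD" and "v \<in> DD" and "w \<in> DD"
  shows "diamond (diamond u v) w = diamond u (diamond v w)
    \<and> shuffle (shuffle u v) w = shuffle u (shuffle v w)"
  using DD_imp_pos_vec[OF assms(1)] DD_imp_pos_vec[OF assms(2)] DD_imp_pos_vec[OF assms(3)]
  by (simp add: diamond_assoc shuffle_assoc)
end
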